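(* Let $f:\mathbb{R}^d\to\mathbb{R}$ be $G$-Lipschitz and $L$-smooth, let $\alpha\in[0,1)$, $\beta\in(0,2)$, $\eta>0$, $r>0$, and let $\bm{g}_k,\bm{p}_k,\bm{x}_k$ be generated by HLF-SZO (defined in the context). Set $\tilde\beta:=1-|1-\beta|$ and suppose $$\theta:=1-\frac{4\eta^2d^2G^2(1+\alpha^2)}{\tilde\beta^2r^2(1-\alpha^2)^2}>0.$$ Then for every $T\ge1$, $$\sum_{k=1}^T\mathbb{E}\big[\|\bm{g}_k\|^2\big]\le \frac{25d}{4\theta\tilde\beta^2}\sum_{k=1}^T\mathbb{E}\big[\|\nabla f(\bm{x}_k)\|^2\big]+\frac{10Tr^2L^2d^2}{\theta\tilde\beta^2},$$ $$\sum_{k=1}^T\mathbb{E}\big[\|\bm{p}_k\|^2\big]\le \frac{2\eta^2(1+\alpha^2)}{(1-\alpha^2)^2}\sum_{k=1}^T\mathbb{E}\big[\|\bm{g}_k\|^2\big].$$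
   Context: $f$ is $G$-Lipschitz and $L$-smooth: $|f(\bm{x})-f(\bm{y})|\le G\|\bm{x}-\bm{y}\|$ and $\|\nabla f(\bm{x})-\nabla f(\bm{y})\|\le L\|\bm{x}-\bm{y}\|$ for all $\bm{x},\bm{y}$. HLF-SZO: let $\bm{u}_1,\bm{u}_2,\dots$ be i.i.d. uniformly distributed on the unit sphere $\mathbb{S}_{d-1}$. Given $\bm{x}_1\in\mathbb{R}^d$, set $\bm{x}_0=\bm{x}_1$, $\bm{p}_0=\bm{0}$, and for $k\ge1$: $z_1=\tfrac12\big(f(\bm{x}_1+r\bm{u}_1)-f(\bm{x}_1-r\bm{u}_1)\big)$, $z_k=(1-\beta)z_{k-1}+f(\bm{x}_k+r\bm{u}_k)-f(\bm{x}_{k-1}+r\bm{u}_{k-1})$ for $k>1$; $\bm{g}_k=\frac{d}{r}z_k\bm{u}_k$, $\bm{p}_k=\alpha\bm{p}_{k-1}+\eta\bm{g}_k$, $\bm{x}_{k+1}=\bm{x}_k-\bm{p}_k$. Expectations are over the random directions $\bm{u}_k$. *)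

theory Defs
  imports "HOL-Probability.Probability"
begin

text \<open>Uniform distribution on the unit sphere of a Euclidean space: the normalized
  surface measure, realised as the cone measure, i.e. the image of the uniform
  distribution on the unit ball under radial projection x \<mapsto> x / norm x.\<close>
definition uniform_sphere :: "'a::euclidean_space measure" where
  "uniform_sphere = distr (uniform_measure lborel (ball 0 1)) borel (\<lambda>x. x /\<^sub>R norm x)"

text \<open>HLF-SZO state at step k: (x_k, z_k, p_k), for k \<ge> 1; index 0 encodes
  x_0 = x_1 and p_0 = 0 (z_0 is a dummy value that is never used).\<close>
primrec hlf_state :: "('a::euclidean_space \<Rightarrow> real) \<Rightarrow> real \<Rightarrow> real \<Rightarrow> real \<Rightarrow> real
    \<Rightarrow> 'a \<Rightarrow> (nat \<Rightarrow> 'a) \<Rightarrow> nat \<Rightarrow> 'a \<times> real \<times> 'a" where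
  "hlf_state f \<alpha> \<beta> \<eta> r x1 u 0 = (x1, 0, 0)"
| "hlf_state f \<alpha> \<beta> \<eta> r x1 u (Suc k) =
     (let (x, z, p) = hlf_state f \<alpha> \<beta> \<eta> r x1 u k;
          x' = x - p;
          z' = (if k = 0 then (f (x' + r *\<^sub>R u 1) - f (x' - r *\<^sub>R u 1)) / 2
                else (1 - \<beta>) * z + f (x' + r *\<^sub>R u (Suc k)) - f (x + r *\<^sub>R u k));
          g = (real DIM('a) / r * z') *\<^sub>R u (Suc k);
          p' = \<alpha> *\<^sub>R p + \<eta> *\<^sub>R g
      in (x', z', p'))"

definition hlf_x where "hlf_x f \<alpha> \<beta> \<eta> r x1 u k = fst (hlf_state f \<alpha> \<beta> \<eta> r x1 u k)"
definition hlf_z where "hlf_z f \<alpha> \<beta> \<eta> r x1 u k = fst (snd (hlf_state f \<alpha> \<beta> \<eta> r x1 u k))"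
definition hlf_p where "hlf_p f \<alpha> \<beta> \<eta> r x1 u k = snd (snd (hlf_state f \<alpha> \<beta> \<eta> r x1 u k))"
definition hlf_g :: "('a::euclidean_space \<Rightarrow> real) \<Rightarrow> real \<Rightarrow> real \<Rightarrow> real \<Rightarrow> real
    \<Rightarrow> 'a \<Rightarrow> (nat \<Rightarrow> 'a) \<Rightarrow> nat \<Rightarrow> 'a" where
  "hlf_g f \<alpha> \<beta> \<eta> r x1 u k = (real DIM('a) / r * hlf_z f \<alpha> \<beta> \<eta> r x1 u k) *\<^sub>R u k"

end

theory Submission
  imports Defs
begin

(*
  Write beta' = 1 - |1 - beta|. Let m_k = r <grad f(x_k), u_k> and let s_k be the
  (1 - beta)-discounted sum of m_1, ..., m_k. The recursion for z_k is a leaky difference: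
  z_k equals q_k = m_k - beta s_(k-1) up to a Taylor remainder of size at most L r^2 / beta'
  and a (1 - beta)-filtered copy of the increments f(x_(k+1)) - f(x_k), which are bounded by
  G |p_k|. Since u_k is uniform on the sphere and independent of u_1, ..., u_(k-1),
  E[m_k s_(k-1)] = 0 and E[m_k^2] = r^2 E|grad f(x_k)|^2 / d, hence
  sum E[q_k^2] <= 2 / (2 - beta) sum E[m_k^2]. The momentum recursion gives
  sum |p_k|^2 <= 2 eta^2 (1 + alpha^2) / (1 - alpha^2)^2 sum |g_k|^2; substituted into the bound
  for sum |g_k|^2 = (d / r)^2 sum z_k^2 it contributes the fraction 1 - theta of the left-hand
  side, which is absorbed because theta > 0.
*)

section \<open>Uniform distribution on the sphere\<close>

lemma prob_space_uniform_sphere: "prob_space (uniform_sphere :: 'a::euclidean_space measure)"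
proof -
  have "measure lborel (ball (0::'a) 1) > 0"
    using content_ball_pos[of 1 "0::'a"] by simp
  then have "emeasure lborel (ball (0::'a) 1) \<noteq> 0"
    by (metis measure_def enn2real_0 less_irrefl)
  moreover have "emeasure lborel (ball (0::'a) 1) \<noteq> \<infinity>"
    using emeasure_lborel_ball_finite[of 0 1] by (simp add: top.not_eq_extremum)
  ultimately show ?thesis
    unfolding uniform_sphere_def
    by (intro prob_space.prob_space_distr prob_space_uniform_measure) auto
qed

lemma sets_uniform_sphere [simp, measurable_cong]:
  "sets (uniform_sphere :: 'a::euclidean_space measure) = sets borel"
  by (simp add: uniform_sphere_def)

lemma space_uniform_sphere [simp]: "space (uniform_sphere :: 'a::euclidean_space measure) = UNIV"
  by (simp add: uniform_sphere_def)

lemma AE_uniform_sphere_norm: "AE u in (uniform_sphere :: 'a::euclidean_space measure). norm u = 1"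
proof -
  have "AE x in uniform_measure lborel (ball (0::'a) 1). x \<noteq> 0"
    by (rule AE_uniform_measureI) (auto intro: AE_mp[OF AE_lborel_singleton[of 0]])
  then show ?thesis
    unfolding uniform_sphere_def by (subst AE_distr_iff) (auto elim: AE_mp)
qed

lemma borel_measurable_orthogonal_transformation:
  fixes T :: "'a::euclidean_space \<Rightarrow> 'a"
  assumes "orthogonal_transformation T"
  shows "T \<in> borel_measurable borel"
proof -
  have "bounded_linear T"
    using orthogonal_transformation_linear[OF assms] by (simp add: linear_conv_bounded_linear)
  then show ?thesis
    by (intro borel_measurable_continuous_onI linear_continuous_on)
qed

lemma distr_uniform_sphere_orthogonal:
  fixes T :: "'a::euclidean_space \<Rightarrow> 'a"
  assumes T: "orthogonal_transformation T" and lborel_T: "distr lborel borel T = lborel"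
  shows "distr uniform_sphere borel T = uniform_sphere"
proof -
  let ?B = "ball (0::'a) 1"
  let ?U = "uniform_measure lborel ?B"
  have [measurable]: "T \<in> borel_measurable borel"
    using T by (rule borel_measurable_orthogonal_transformation)
  have distr_U: "distr ?U borel T = ?U"
  proof (rule measure_eqI)
    fix A assume "A \<in> sets (distr ?U borel T)"
    then have [measurable]: "A \<in> sets borel" by simp
    have "?B \<inter> T -` A = T -` (?B \<inter> A)"
      using orthogonal_transformation_norm[OF T] by auto
    then have "emeasure lborel (?B \<inter> T -` A) = emeasure (distr lborel borel T) (?B \<inter> A)"
      by (simp add: emeasure_distr)
    moreover have "T -` A \<in> sets lborel"
      using measurable_sets_borel[of T borel A] by simp
    ultimately show "emeasure (distr ?U borel T) A = emeasure ?U A"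
      by (simp add: emeasure_distr emeasure_uniform_measure lborel_T)
  qed simp
  have "(\<lambda>x. x /\<^sub>R norm x) \<circ> T = T \<circ> (\<lambda>x. x /\<^sub>R norm x)"
    using T by (auto simp: orthogonal_transformation_norm orthogonal_transformation_scaleR)
  then have "distr uniform_sphere borel T = distr (distr ?U borel T) borel (\<lambda>x. x /\<^sub>R norm x)"
    unfolding uniform_sphere_def by (simp add: distr_distr)
  then show ?thesis
    by (simp add: distr_U uniform_sphere_def)
qed

lemma integral_uniform_sphere_orthogonal:
  fixes T :: "'a::euclidean_space \<Rightarrow> 'a" and h :: "'a \<Rightarrow> real"
  assumes "orthogonal_transformation T" "distr lborel borel T = lborel"
    and h: "h \<in> borel_measurable borel"
  shows "(\<integral>u. h (T u) \<partial>uniform_sphere) = (\<integral>u. h u \<partial>uniform_sphere)"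
proof -
  have "T \<in> measurable uniform_sphere borel"
    unfolding measurable_cong_sets[OF sets_uniform_sphere refl]
    using assms(1) by (rule borel_measurable_orthogonal_transformation)
  from integral_distr[OF this h] show ?thesis
    by (simp add: distr_uniform_sphere_orthogonal[OF assms(1,2)])
qed

definition basis_reflection :: "'a::euclidean_space \<Rightarrow> 'a \<Rightarrow> 'a" where
  "basis_reflection b x = x - (2 * (x \<bullet> b)) *\<^sub>R b"

lemma inner_basis_reflection:
  "b \<in> Basis \<Longrightarrow> i \<in> Basis \<Longrightarrow>
    basis_reflection b x \<bullet> i = (if i = b then - (x \<bullet> i) else x \<bullet> i)"
  by (auto simp: basis_reflection_def inner_diff_left inner_Basis)

lemma orthogonal_transformation_basis_reflection:
  assumes "b \<in> Basis"
  shows "orthogonal_transformation (basis_reflection b)"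
  unfolding orthogonal_transformation
proof (intro conjI allI)
  show "linear (basis_reflection b)"
    by (rule linearI) (auto simp: basis_reflection_def algebra_simps inner_add_left)
  fix x
  have "norm (basis_reflection b x) ^ 2 = norm x ^ 2"
    unfolding basis_reflection_def power2_norm_eq_inner using assms
    by (simp add: inner_diff_left inner_diff_right algebra_simps inner_commute)
  then show "norm (basis_reflection b x) = norm x"
    by (simp add: power2_eq_iff_nonneg)
qed

lemma distr_lborel_basis_reflection:
  assumes b: "b \<in> (Basis :: 'a::euclidean_space set)"
  shows "distr lborel borel (basis_reflection b) = (lborel :: 'a measure)"
proof -
  define c where "c j = (if j = b then -1 else (1::real))" for j :: 'a
  have c: "\<And>j. j \<in> Basis \<Longrightarrow> c j \<noteq> 0"
    by (simp add: c_def)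
  have T: "(\<lambda>x. 0 + (\<Sum>j\<in>Basis. (c j * (x \<bullet> j)) *\<^sub>R j)) = basis_reflection b"
    by (rule ext, rule euclidean_eqI)
       (simp add: inner_sum_left inner_Basis if_distrib c_def inner_basis_reflection[OF b] cong: if_cong)
  have P: "(\<Prod>j\<in>Basis. \<bar>c j\<bar>) = 1"
    by (intro prod.neutral) (simp add: c_def)
  show ?thesis
    using lborel_affine_euclidean[of c 0, OF c] unfolding T P by (simp add: density_1)
qed

definition basis_permutation :: "('a::euclidean_space \<Rightarrow> 'a) \<Rightarrow> 'a \<Rightarrow> 'a" where
  "basis_permutation \<pi> x = (\<Sum>j\<in>Basis. (x \<bullet> \<pi> j) *\<^sub>R j)"

lemma inner_basis_permutation: "i \<in> Basis \<Longrightarrow> basis_permutation \<pi> x \<bullet> i = x \<bullet> \<pi> i"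
  by (simp add: basis_permutation_def inner_sum_left inner_Basis if_distrib cong: if_cong)

lemma orthogonal_transformation_basis_permutation:
  assumes \<pi>: "\<pi> permutes Basis"
  shows "orthogonal_transformation (basis_permutation \<pi>)"
  unfolding orthogonal_transformation
proof (intro conjI allI)
  show "linear (basis_permutation \<pi>)"
    by (rule linearI) (simp_all add: basis_permutation_def inner_add_left scaleR_add_left
        sum.distrib scaleR_sum_right)
  have norm_sq: "norm y ^ 2 = (\<Sum>i\<in>Basis. (y \<bullet> i)\<^sup>2)" for y :: 'a
    unfolding power2_norm_eq_inner unfolding power2_eq_square by (rule euclidean_inner)
  fix x :: 'a
  have "norm (basis_permutation \<pi> x) ^ 2 = (\<Sum>i\<in>Basis. (x \<bullet> \<pi> i)\<^sup>2)"
    by (simp add: norm_sq inner_basis_permutation)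
  also have "\<dots> = norm x ^ 2"
    using sum.permute[OF \<pi>, of "\<lambda>i. (x \<bullet> i)\<^sup>2"] by (simp add: comp_def norm_sq)
  finally show "norm (basis_permutation \<pi> x) = norm x"
    by (simp add: power2_eq_iff_nonneg)
qed

lemma distr_lborel_basis_permutation:
  assumes \<pi>: "\<pi> permutes (Basis :: 'a::euclidean_space set)"
  shows "distr lborel borel (basis_permutation \<pi>) = (lborel :: 'a measure)"
proof (rule lborel_eqI[symmetric])
  let ?P = "basis_permutation \<pi>" and ?Q = "basis_permutation (inv \<pi>)"
  have \<pi>': "inv \<pi> permutes Basis"
    using \<pi> by (rule permutes_inv)
  have [measurable]: "?P \<in> borel_measurable borel"
    using orthogonal_transformation_basis_permutation[OF \<pi>]
    by (rule borel_measurable_orthogonal_transformation)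
  fix l u :: 'a assume le: "\<And>i. i \<in> Basis \<Longrightarrow> l \<bullet> i \<le> u \<bullet> i"
  have "?P -` box l u = box (?Q l) (?Q u)"
  proof (intro set_eqI iffI)
    fix x assume "x \<in> ?P -` box l u"
    then have x: "l \<bullet> i < x \<bullet> \<pi> i \<and> x \<bullet> \<pi> i < u \<bullet> i" if "i \<in> Basis" for i
      using that by (simp add: mem_box inner_basis_permutation)
    show "x \<in> box (?Q l) (?Q u)"
      unfolding mem_box
    proof
      fix j :: 'a assume "j \<in> Basis"
      with x[of "inv \<pi> j"] show "?Q l \<bullet> j < x \<bullet> j \<and> x \<bullet> j < ?Q u \<bullet> j"
        by (simp add: inner_basis_permutation permutes_inverses(1)[OF \<pi>] permutes_in_image[OF \<pi>'])
    qed
  next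
    fix x assume "x \<in> box (?Q l) (?Q u)"
    then have x: "l \<bullet> inv \<pi> j < x \<bullet> j \<and> x \<bullet> j < u \<bullet> inv \<pi> j" if "j \<in> Basis" for j
      using that by (simp add: mem_box inner_basis_permutation)
    show "x \<in> ?P -` box l u"
      unfolding vimage_eq mem_box
    proof
      fix i :: 'a assume "i \<in> Basis"
      with x[of "\<pi> i"] show "l \<bullet> i < ?P x \<bullet> i \<and> ?P x \<bullet> i < u \<bullet> i"
        by (simp add: inner_basis_permutation permutes_inverses(2)[OF \<pi>] permutes_in_image[OF \<pi>])
    qed
  qed
  then have "emeasure (distr lborel borel ?P) (box l u) = (\<Prod>i\<in>Basis. (u \<bullet> inv \<pi> i - l \<bullet> inv \<pi> i))"
    using \<pi>' le by (simp add: emeasure_distr emeasure_lborel_box inner_basis_permutation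
        inner_diff_left permutes_in_image)
  also have "\<dots> = (\<Prod>i\<in>Basis. (u - l) \<bullet> i)"
    using prod.permute[OF \<pi>', of "\<lambda>i. (u - l) \<bullet> i"] by (simp add: comp_def inner_diff_left)
  finally show "emeasure (distr lborel borel ?P) (box l u) = (\<Prod>i\<in>Basis. (u - l) \<bullet> i)" .
qed simp

lemma integrable_uniform_sphere_bounded:
  fixes h :: "'a::euclidean_space \<Rightarrow> real"
  assumes "h \<in> borel_measurable borel" and "\<And>u. norm u = 1 \<Longrightarrow> \<bar>h u\<bar> \<le> B"
  shows "integrable uniform_sphere h"
proof -
  interpret prob_space "uniform_sphere :: 'a measure"
    by (rule prob_space_uniform_sphere)
  show ?thesis
    using AE_uniform_sphere_norm assms by (intro integrable_const_bound[where B=B]) (auto elim: AE_mp)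
qed

lemma integrable_uniform_sphere_inner_mult:
  "integrable uniform_sphere (\<lambda>u::'a::euclidean_space. (v \<bullet> u) * (w \<bullet> u))"
proof (rule integrable_uniform_sphere_bounded)
  fix u :: 'a assume "norm u = 1"
  then show "\<bar>(v \<bullet> u) * (w \<bullet> u)\<bar> \<le> norm v * norm w"
    using Cauchy_Schwarz_ineq2[of v u] Cauchy_Schwarz_ineq2[of w u]
    by (simp add: abs_mult mult_mono)
qed simp

lemma integral_uniform_sphere_inner: "(\<integral>u. v \<bullet> u \<partial>(uniform_sphere :: 'a::euclidean_space measure)) = 0"
proof -
  have "orthogonal_transformation (uminus :: 'a \<Rightarrow> 'a)"
    using orthogonal_transformation_neg[of "\<lambda>x::'a. x"] by (simp add: fun_Compl_def)
  moreover have "distr lborel borel uminus = (lborel :: 'a measure)"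
    using lborel_affine[of "-1" "0::'a"] by (simp add: density_1)
  ultimately have "(\<integral>u. v \<bullet> - u \<partial>(uniform_sphere :: 'a measure)) = (\<integral>u. v \<bullet> u \<partial>uniform_sphere)"
    by (intro integral_uniform_sphere_orthogonal) simp_all
  then show ?thesis
    by simp
qed

lemma integral_uniform_sphere_coord_mult:
  assumes "b \<in> Basis" "b' \<in> Basis" "b \<noteq> b'"
  shows "(\<integral>u. (u \<bullet> b) * (u \<bullet> b') \<partial>(uniform_sphere :: 'a::euclidean_space measure)) = 0"
proof -
  have "(\<integral>u. (basis_reflection b u \<bullet> b) * (basis_reflection b u \<bullet> b') \<partial>(uniform_sphere :: 'a measure))
      = (\<integral>u. (u \<bullet> b) * (u \<bullet> b') \<partial>uniform_sphere)"
    using assms by (intro integral_uniform_sphere_orthogonal orthogonal_transformation_basis_reflection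
        distr_lborel_basis_reflection) simp_all
  then show ?thesis
    using assms by (simp add: inner_basis_reflection)
qed

lemma integral_uniform_sphere_coord_sq:
  assumes b: "b \<in> Basis"
  shows "(\<integral>u. (u \<bullet> b)\<^sup>2 \<partial>(uniform_sphere :: 'a::euclidean_space measure)) = 1 / DIM('a)"
proof -
  interpret prob_space "uniform_sphere :: 'a measure"
    by (rule prob_space_uniform_sphere)
  have same: "(\<integral>u. (u \<bullet> b')\<^sup>2 \<partial>uniform_sphere) = (\<integral>u. (u \<bullet> b)\<^sup>2 \<partial>uniform_sphere)"
    if b': "b' \<in> Basis" for b' :: 'a
  proof -
    have \<pi>: "Transposition.transpose b b' permutes Basis"
      using b b' by (rule permutes_swap_id)
    have "(\<integral>u. (basis_permutation (Transposition.transpose b b') u \<bullet> b)\<^sup>2 \<partial>uniform_sphere) = (\<integral>u. (u \<bullet> b)\<^sup>2 \<partial>uniform_sphere)"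
      using \<pi> by (intro integral_uniform_sphere_orthogonal orthogonal_transformation_basis_permutation
          distr_lborel_basis_permutation) simp_all
    then show ?thesis
      using b by (simp add: inner_basis_permutation)
  qed
  have integrable_sq: "integrable uniform_sphere (\<lambda>u::'a. (u \<bullet> i)\<^sup>2)" for i
    using integrable_uniform_sphere_inner_mult[of i i] by (simp add: power2_eq_square inner_commute)
  have "(\<Sum>b'\<in>Basis. (\<integral>u. (u \<bullet> b')\<^sup>2 \<partial>(uniform_sphere :: 'a measure)))
      = (\<integral>u. (\<Sum>b'\<in>Basis. (u \<bullet> b')\<^sup>2) \<partial>(uniform_sphere :: 'a measure))"
    using integrable_sq by simp
  also have "\<dots> = (\<integral>u. 1 \<partial>(uniform_sphere :: 'a measure))"
  proof (rule integral_cong_AE)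
    show "AE u in uniform_sphere. (\<Sum>b'\<in>Basis. (u \<bullet> b')\<^sup>2) = 1"
      using AE_uniform_sphere_norm
      by eventually_elim (simp add: power2_eq_square dot_square_norm flip: euclidean_inner)
  qed simp_all
  finally show ?thesis
    using same prob_space by (simp add: field_simps)
qed

lemma integral_uniform_sphere_inner_sq:
  "(\<integral>u. (v \<bullet> u)\<^sup>2 \<partial>(uniform_sphere :: 'a::euclidean_space measure)) = (norm v)\<^sup>2 / DIM('a)"
proof -
  have integrable: "integrable uniform_sphere (\<lambda>u::'a. c * ((u \<bullet> b) * (u \<bullet> b')))" for c b b'
    using integrable_uniform_sphere_inner_mult[of b b'] by (simp add: inner_commute)
  have "(v \<bullet> u)\<^sup>2 = (\<Sum>b\<in>Basis. \<Sum>b'\<in>Basis. ((v \<bullet> b) * (v \<bullet> b')) * ((u \<bullet> b) * (u \<bullet> b')))" for u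
    by (simp add: euclidean_inner[of v u] power2_eq_square sum_product algebra_simps)
  then have "(\<integral>u. (v \<bullet> u)\<^sup>2 \<partial>(uniform_sphere :: 'a measure))
      = (\<Sum>b\<in>Basis. \<Sum>b'\<in>Basis. ((v \<bullet> b) * (v \<bullet> b')) * (\<integral>u. (u \<bullet> b) * (u \<bullet> b') \<partial>uniform_sphere))"
    using integrable by (simp add: Bochner_Integration.integrable_sum)
  also have "\<dots> = (\<Sum>b\<in>Basis. (v \<bullet> b)\<^sup>2 / DIM('a))"
  proof (rule sum.cong[OF refl])
    fix b :: 'a assume b: "b \<in> Basis"
    have "(\<Sum>b'\<in>Basis. ((v \<bullet> b) * (v \<bullet> b')) * (\<integral>u. (u \<bullet> b) * (u \<bullet> b') \<partial>(uniform_sphere :: 'a measure)))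
        = (\<Sum>b'\<in>Basis. if b' = b then (v \<bullet> b)\<^sup>2 / DIM('a) else 0)"
      using b integral_uniform_sphere_coord_sq[OF b]
      by (intro sum.cong refl) (auto simp: integral_uniform_sphere_coord_mult power2_eq_square)
    then show "(\<Sum>b'\<in>Basis. ((v \<bullet> b) * (v \<bullet> b')) * (\<integral>u. (u \<bullet> b) * (u \<bullet> b') \<partial>uniform_sphere))
        = (v \<bullet> b)\<^sup>2 / DIM('a)"
      using b by simp
  qed
  also have "\<dots> = (norm v)\<^sup>2 / DIM('a)"
    unfolding power2_norm_eq_inner euclidean_inner[of v v]
    by (simp add: sum_divide_distrib power2_eq_square)
  finally show ?thesis .
qed

section \<open>Independent uniform directions\<close>

lemma (in prob_space) integral_indep_var_eq:
  fixes \<Phi> :: "'x \<times> 'x \<Rightarrow> real" and B :: real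
  assumes indep: "indep_var N X N' Y"
    and \<Phi> [measurable]: "\<Phi> \<in> borel_measurable (N \<Otimes>\<^sub>M N')" and bounded: "\<And>z. \<bar>\<Phi> z\<bar> \<le> B"
  shows "(\<integral>\<omega>. \<Phi> (X \<omega>, Y \<omega>) \<partial>M) = (\<integral>\<omega>. (\<integral>y. \<Phi> (X \<omega>, y) \<partial>distr M N' Y) \<partial>M)"
proof -
  have [measurable]: "X \<in> measurable M N" "Y \<in> measurable M N'"
    using indep_var_rv1[OF indep] indep_var_rv2[OF indep] .
  interpret PX: prob_space "distr M N X"
    by (rule prob_space_distr) measurable
  interpret PY: prob_space "distr M N' Y"
    by (rule prob_space_distr) measurable
  interpret PXY: pair_prob_space "distr M N X" "distr M N' Y" ..
  have "\<Phi> \<in> borel_measurable (distr M N X \<Otimes>\<^sub>M distr M N' Y)"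
    using \<Phi> by (simp cong: measurable_cong_sets)
  then have integrable: "integrable (distr M N X \<Otimes>\<^sub>M distr M N' Y) \<Phi>"
    using bounded by (intro PXY.integrable_const_bound[where B=B]) auto
  have "(\<integral>\<omega>. \<Phi> (X \<omega>, Y \<omega>) \<partial>M) = (\<integral>z. \<Phi> z \<partial>distr M (N \<Otimes>\<^sub>M N') (\<lambda>\<omega>. (X \<omega>, Y \<omega>)))"
    by (rule integral_distr[symmetric]) measurable
  also have "\<dots> = (\<integral>z. \<Phi> z \<partial>(distr M N X \<Otimes>\<^sub>M distr M N' Y))"
    using indep by (simp add: indep_var_distribution_eq)
  also have "\<dots> = (\<integral>x. (\<integral>y. \<Phi> (x, y) \<partial>distr M N' Y) \<partial>distr M N X)"
    by (rule PXY.integral_fst'[symmetric]) (rule integrable)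
  also have "\<dots> = (\<integral>\<omega>. (\<integral>y. \<Phi> (X \<omega>, y) \<partial>distr M N' Y) \<partial>M)"
  proof (rule integral_distr)
    show "(\<lambda>x. \<integral>y. \<Phi> (x, y) \<partial>distr M N' Y) \<in> borel_measurable N"
      using \<Phi> by (intro PY.borel_measurable_lebesgue_integral) (simp cong: measurable_cong_sets)
  qed measurable
  finally show ?thesis .
qed

lemma integral_indep_uniform_sphere:
  fixes M :: "'m measure" and V :: "nat \<Rightarrow> 'm \<Rightarrow> 'a::euclidean_space"
    and \<Phi> :: "(nat \<Rightarrow> 'a) \<times> 'a \<Rightarrow> real"
  assumes "prob_space M"
    and indep: "prob_space.indep_vars M (\<lambda>_. borel) V {1..}"
    and distr_V: "distr M borel (V k) = uniform_sphere" and k: "1 \<le> k"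
    and \<Phi>[measurable]: "\<Phi> \<in> borel_measurable (PiM {1..<k} (\<lambda>_. borel) \<Otimes>\<^sub>M borel)"
    and bounded: "\<And>z. \<bar>\<Phi> z\<bar> \<le> B"
  shows "(\<integral>\<omega>. \<Phi> (restrict (\<lambda>i. V i \<omega>) {1..<k}, V k \<omega>) \<partial>M)
       = (\<integral>\<omega>. (\<integral>u. \<Phi> (restrict (\<lambda>i. V i \<omega>) {1..<k}, u) \<partial>uniform_sphere) \<partial>M)"
proof -
  interpret prob_space M by fact
  let ?N = "PiM {1..<k} (\<lambda>_. borel :: 'a measure)" and ?Nk = "PiM {k} (\<lambda>_. borel :: 'a measure)"
  let ?X = "\<lambda>\<omega>. restrict (\<lambda>i. V i \<omega>) {1..<k}" and ?Y = "\<lambda>\<omega>. restrict (\<lambda>i. V i \<omega>) {k}"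
  define \<Phi>' where "\<Phi>' z = \<Phi> (fst z, snd z k)" for z :: "(nat \<Rightarrow> 'a) \<times> (nat \<Rightarrow> 'a)"
  have indep_XY: "indep_var ?N ?X ?Nk ?Y"
    using k by (intro indep_var_restrict[OF indep]) auto
  have [measurable]: "?X \<in> measurable M ?N" "?Y \<in> measurable M ?Nk"
    using indep_var_rv1[OF indep_XY] indep_var_rv2[OF indep_XY] .
  have [measurable]: "V k \<in> borel_measurable M"
    using measurable_compose[OF indep_var_rv2[OF indep_XY] measurable_component_singleton[of k "{k}"]]
    by simp
  have "\<Phi>' \<in> borel_measurable (?N \<Otimes>\<^sub>M ?Nk)"
    unfolding \<Phi>'_def by measurable
  then have "(\<integral>\<omega>. \<Phi>' (?X \<omega>, ?Y \<omega>) \<partial>M) = (\<integral>\<omega>. (\<integral>y. \<Phi>' (?X \<omega>, y) \<partial>distr M ?Nk ?Y) \<partial>M)"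
    by (rule integral_indep_var_eq[OF indep_XY, where B = B]) (simp add: \<Phi>'_def bounded)
  also have "\<dots> = (\<integral>\<omega>. (\<integral>u. \<Phi> (?X \<omega>, u) \<partial>uniform_sphere) \<partial>M)"
  proof (intro Bochner_Integration.integral_cong refl)
    have "(\<integral>y. \<Phi>' (x, y) \<partial>distr M ?Nk ?Y) = (\<integral>u. \<Phi> (x, u) \<partial>uniform_sphere)" if "x \<in> space ?N" for x
    proof -
      note [measurable] = that
      have "(\<integral>y. \<Phi>' (x, y) \<partial>distr M ?Nk ?Y) = (\<integral>u. \<Phi> (x, u) \<partial>distr M borel (V k))"
        by (simp add: integral_distr \<Phi>'_def)
      then show ?thesis
        by (simp add: distr_V)
    qed
    then show "(\<integral>y. \<Phi>' (?X \<omega>, y) \<partial>distr M ?Nk ?Y) = (\<integral>u. \<Phi> (?X \<omega>, u) \<partial>uniform_sphere)" for \<omega>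
      by (simp add: space_PiM)
  qed
  finally show ?thesis
    by (simp add: \<Phi>'_def)
qed

(* The directions are unit vectors only almost surely; retracting them onto the sphere makes
   every integrand below bounded everywhere without changing its integral. *)
definition force_unit :: "'a::euclidean_space \<Rightarrow> 'a" where
  "force_unit v = (if norm v = 1 then v else (SOME b. b \<in> Basis))"

lemma norm_force_unit [simp]: "norm (force_unit v) = 1"
proof -
  have "(SOME b. b \<in> (Basis :: 'a set)) \<in> Basis"
    by (rule someI_ex) (use nonempty_Basis in blast)
  then show ?thesis
    by (simp add: force_unit_def)
qed

lemma force_unit_eq: "norm v = 1 \<Longrightarrow> force_unit v = v"
  by (simp add: force_unit_def)

lemma borel_measurable_force_unit [measurable]: "force_unit \<in> borel_measurable borel"
  unfolding force_unit_def by measurable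

lemma distr_uniform_sphere_force_unit:
  "distr uniform_sphere borel force_unit = (uniform_sphere :: 'a::euclidean_space measure)"
proof -
  have "distr uniform_sphere borel force_unit = distr uniform_sphere borel (\<lambda>u::'a. u)"
    using AE_uniform_sphere_norm by (auto simp: force_unit_eq elim: AE_mp intro!: distr_cong_AE)
  also have "\<dots> = uniform_sphere"
    by (rule distr_id2) simp
  finally show ?thesis .
qed

definition extend_unit :: "nat \<Rightarrow> (nat \<Rightarrow> 'a::euclidean_space) \<Rightarrow> nat \<Rightarrow> 'a" where
  "extend_unit k y i = (if i \<in> {1..<k} then force_unit (y i) else force_unit 0)"

lemma norm_extend_unit [simp]: "norm (extend_unit k y i) = 1"
  by (simp add: extend_unit_def)

lemma measurable_extend_unit [measurable]:
  "(\<lambda>y. extend_unit k y i) \<in> borel_measurable (PiM {1..<k} (\<lambda>_. borel))"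
proof (cases "i \<in> {1..<k}")
  case True
  then show ?thesis
    using measurable_compose[OF measurable_component_singleton[OF True] borel_measurable_force_unit]
    by (simp add: extend_unit_def)
next
  case False
  then show ?thesis
    unfolding extend_unit_def if_not_P[OF False] by simp
qed

lemma integral_fresh_uniform_direction:
  fixes M :: "'m measure" and V :: "nat \<Rightarrow> 'm \<Rightarrow> 'a::euclidean_space"
    and F :: "(nat \<Rightarrow> 'a) \<Rightarrow> 'a \<Rightarrow> real"
  assumes "prob_space M"
    and indep: "prob_space.indep_vars M (\<lambda>_. borel) V {1..}"
    and distr_V: "distr M borel (V k) = uniform_sphere" and k: "1 \<le> k"
    and unit: "\<And>i \<omega>. norm (V i \<omega>) = 1"
    and local: "\<And>u u' v. (\<And>i. 1 \<le> i \<Longrightarrow> i < k \<Longrightarrow> u i = u' i) \<Longrightarrow> F u v = F u' v"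
    and measurable: "(\<lambda>z. F (extend_unit k (fst z)) (snd z))
      \<in> borel_measurable (PiM {1..<k} (\<lambda>_. borel) \<Otimes>\<^sub>M borel)"
    and bounded: "\<And>u v. (\<And>i. norm (u i) = 1) \<Longrightarrow> norm v = 1 \<Longrightarrow> \<bar>F u v\<bar> \<le> B"
  shows "(\<integral>\<omega>. F (\<lambda>i. V i \<omega>) (V k \<omega>) \<partial>M)
    = (\<integral>\<omega>. (\<integral>v. F (\<lambda>i. V i \<omega>) v \<partial>uniform_sphere) \<partial>M)"
proof -
  define \<Phi> where "\<Phi> z = F (extend_unit k (fst z)) (force_unit (snd z))" for z :: "(nat \<Rightarrow> 'a) \<times> 'a"
  have extend_V: "F (extend_unit k (restrict (\<lambda>i. V i \<omega>) {1..<k})) = F (\<lambda>i. V i \<omega>)" for \<omega>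
    by (intro ext local) (simp add: extend_unit_def force_unit_eq unit)
  have "\<Phi> \<in> borel_measurable (PiM {1..<k} (\<lambda>_. borel) \<Otimes>\<^sub>M borel)"
    unfolding \<Phi>_def using measurable_compose[OF measurable_Pair[OF measurable_fst
          measurable_compose[OF measurable_snd borel_measurable_force_unit]] measurable]
    by (simp add: comp_def)
  moreover have "\<bar>\<Phi> z\<bar> \<le> B" for z
    unfolding \<Phi>_def by (rule bounded) simp_all
  ultimately have "(\<integral>\<omega>. \<Phi> (restrict (\<lambda>i. V i \<omega>) {1..<k}, V k \<omega>) \<partial>M)
      = (\<integral>\<omega>. (\<integral>v. \<Phi> (restrict (\<lambda>i. V i \<omega>) {1..<k}, v) \<partial>uniform_sphere) \<partial>M)"
    by (rule integral_indep_uniform_sphere[OF assms(1) indep distr_V k])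
  moreover have "(\<integral>v. \<Phi> (restrict (\<lambda>i. V i \<omega>) {1..<k}, v) \<partial>uniform_sphere)
      = (\<integral>v. F (\<lambda>i. V i \<omega>) v \<partial>uniform_sphere)" for \<omega>
  proof -
    have "restrict (\<lambda>i. V i \<omega>) {1..<k} \<in> space (PiM {1..<k} (\<lambda>_. borel))"
      by (simp add: space_PiM)
    from measurable_Pair2[OF measurable this]
    have [measurable]: "F (\<lambda>i. V i \<omega>) \<in> borel_measurable borel"
      by (simp only: fst_conv snd_conv extend_V)
    show ?thesis
      unfolding \<Phi>_def fst_conv snd_conv extend_V
      using AE_uniform_sphere_norm
      by (intro integral_cong_AE) (auto simp: force_unit_eq elim: AE_mp)
  qed
  ultimately show ?thesis
    by (simp only: \<Phi>_def fst_conv snd_conv extend_V force_unit_eq[OF unit])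
qed

lemma force_unit_modification:
  fixes M :: "'m measure" and U :: "nat \<Rightarrow> 'm \<Rightarrow> 'a::euclidean_space"
  assumes M: "prob_space M" and indep: "prob_space.indep_vars M (\<lambda>_. borel) U {1..}"
    and uniform: "\<And>k. k \<ge> 1 \<Longrightarrow> distr M borel (U k) = uniform_sphere"
  obtains V where "prob_space.indep_vars M (\<lambda>_. borel) V {1..}"
    and "\<And>k. k \<ge> 1 \<Longrightarrow> distr M borel (V k) = uniform_sphere"
    and "\<And>i \<omega>. norm (V i \<omega>) = 1" and "\<And>i. V i \<in> borel_measurable M"
    and "AE \<omega> in M. \<forall>i\<ge>1. V i \<omega> = U i \<omega>"
proof
  interpret prob_space M
    by (rule M)
  define V where "V i \<omega> = force_unit (if i = 0 then 0 else U i \<omega>)" for i \<omega>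
  have measurable_U [measurable]: "U i \<in> borel_measurable M" if "1 \<le> i" for i
    using indep that by (auto simp: indep_vars_def)
  have V_eq: "V i = force_unit \<circ> U i" if "1 \<le> i" for i
    using that by (auto simp: V_def)
  have "indep_vars (\<lambda>_. borel) (\<lambda>i. force_unit \<circ> U i) {1..}"
    using indep by (rule indep_vars_compose) simp
  then show "indep_vars (\<lambda>_. borel) V {1..}"
    by (rule indep_vars_cong[THEN iffD1, rotated 3]) (auto simp: V_eq)
  show "distr M borel (V k) = uniform_sphere" if "k \<ge> 1" for k
  proof -
    have "distr M borel (V k) = distr (distr M borel (U k)) borel force_unit"
      using that by (simp add: V_eq distr_distr)
    then show ?thesis
      by (simp add: uniform[OF that] distr_uniform_sphere_force_unit)
  qed
  show "norm (V i \<omega>) = 1" for i \<omega>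
    by (simp add: V_def)
  show "V i \<in> borel_measurable M" for i
  proof (cases "i = 0")
    case True
    then show ?thesis
      by (simp add: V_def[abs_def])
  next
    case False
    then show ?thesis
      using V_eq[of i] by simp
  qed
  have "AE \<omega> in M. V i \<omega> = U i \<omega>" if "1 \<le> i" for i
  proof -
    have "AE u in distr M borel (U i). norm u = 1"
      unfolding uniform[OF that] by (rule AE_uniform_sphere_norm)
    then show ?thesis
      using that by (subst (asm) AE_distr_iff) (auto simp: V_eq force_unit_eq)
  qed
  then show "AE \<omega> in M. \<forall>i\<ge>1. V i \<omega> = U i \<omega>"
    by (subst AE_all_countable) (auto intro: AE_impI)
qed

lemma integral_seq_cong_AE:
  fixes h :: "(nat \<Rightarrow> 'a::topological_space) \<Rightarrow> real" and U V :: "nat \<Rightarrow> 'm \<Rightarrow> 'a"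
  assumes AE: "AE \<omega> in M. \<forall>i\<ge>1. V i \<omega> = U i \<omega>"
    and U: "\<And>i. i \<ge> 1 \<Longrightarrow> U i \<in> borel_measurable M" and V: "\<And>i. V i \<in> borel_measurable M"
    and local: "\<And>u v. (\<And>i. 1 \<le> i \<Longrightarrow> u i = v i) \<Longrightarrow> h u = h v"
    and measurable: "\<And>W. (\<And>i. W i \<in> borel_measurable M) \<Longrightarrow> (\<lambda>\<omega>. h (\<lambda>i. W i \<omega>)) \<in> borel_measurable M"
  shows "(\<integral>\<omega>. h (\<lambda>i. U i \<omega>) \<partial>M) = (\<integral>\<omega>. h (\<lambda>i. V i \<omega>) \<partial>M)"
proof -
  define U' where "U' i = (if i = 0 then V 0 else U i)" for i
  have U': "U' i \<in> borel_measurable M" for i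
    using U[of i] V[of 0] by (cases "i = 0") (simp_all add: U'_def)
  have "(\<integral>\<omega>. h (\<lambda>i. U i \<omega>) \<partial>M) = (\<integral>\<omega>. h (\<lambda>i. U' i \<omega>) \<partial>M)"
    by (intro Bochner_Integration.integral_cong refl local) (simp add: U'_def)
  also have "\<dots> = (\<integral>\<omega>. h (\<lambda>i. V i \<omega>) \<partial>M)"
  proof (rule integral_cong_AE)
    show "(\<lambda>\<omega>. h (\<lambda>i. U' i \<omega>)) \<in> borel_measurable M" "(\<lambda>\<omega>. h (\<lambda>i. V i \<omega>)) \<in> borel_measurable M"
      by (rule measurable, rule U', rule measurable, rule V)
    show "AE \<omega> in M. h (\<lambda>i. U' i \<omega>) = h (\<lambda>i. V i \<omega>)"
      using AE by eventually_elim (rule local, simp add: U'_def)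
  qed
  finally show ?thesis .
qed

lemma power2_add_le_weighted:
  fixes a c x y :: real
  assumes "0 \<le> a" "0 < c" "a + c = 1"
  shows "(a * x + y)\<^sup>2 \<le> a * x\<^sup>2 + y\<^sup>2 / c"
proof -
  have "c * (a * x\<^sup>2 + y\<^sup>2 / c) - c * (a * x + y)\<^sup>2 = a * (c * x - y)\<^sup>2"
    using assms(2) unfolding eq_diff_eq[THEN iffD2, OF assms(3)]
    by (simp add: field_simps power2_eq_square)
  moreover have "0 \<le> a * (c * x - y)\<^sup>2"
    using assms by simp
  ultimately have "c * (a * x + y)\<^sup>2 \<le> c * (a * x\<^sup>2 + y\<^sup>2 / c)"
    by linarith
  then show ?thesis
    using assms(2) by simp
qed

lemma sum_lessThan_le_sum_atLeast1:
  fixes s :: "nat \<Rightarrow> real"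
  assumes "s 0 = 0" "\<And>k. 0 \<le> s k"
  shows "(\<Sum>k<T. s k) \<le> (\<Sum>k=1..T. s k)"
proof -
  have "(\<Sum>k<T. s k) \<le> (\<Sum>k<Suc T. s k)"
    using assms(2) by simp
  also have "\<dots> = (\<Sum>k=1..T. s k)"
    unfolding sum.lessThan_Suc_shift using assms(1) by (simp add: sum.atLeast1_atMost_eq)
  finally show ?thesis .
qed

lemma sum_le_of_linear_recursion_le:
  fixes s m :: "nat \<Rightarrow> real"
  assumes q: "0 \<le> q" "q < 1" and s: "s 0 = 0" "\<And>k. 0 \<le> s k"
    and step: "\<And>k. s (Suc k) \<le> q * s k + m (Suc k)"
  shows "(\<Sum>k=1..T. s k) \<le> (\<Sum>k=1..T. m k) / (1 - q)"
proof -
  have "(\<Sum>k=1..T. s k) \<le> (\<Sum>k<T. q * s k + m (Suc k))"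
    using step by (simp add: sum.atLeast1_atMost_eq sum_mono)
  also have "\<dots> = q * (\<Sum>k<T. s k) + (\<Sum>k=1..T. m k)"
    by (simp add: sum.distrib sum_distrib_left sum.atLeast1_atMost_eq)
  also have "\<dots> \<le> q * (\<Sum>k=1..T. s k) + (\<Sum>k=1..T. m k)"
    using sum_lessThan_le_sum_atLeast1[of s, OF s] q by (simp add: mult_left_mono)
  finally show ?thesis
    using q by (simp add: field_simps)
qed

lemma sum_norm_linear_recursion_le:
  fixes x d :: "nat \<Rightarrow> 'a::real_normed_vector"
  assumes a: "\<bar>a\<bar> < 1" and x0: "x 0 = 0"
    and step: "\<And>k. x (Suc k) = a *\<^sub>R x k + d (Suc k)"
  shows "(\<Sum>k=1..T. (norm (x k))\<^sup>2) \<le> (\<Sum>k=1..T. (norm (d k))\<^sup>2) / (1 - \<bar>a\<bar>)\<^sup>2"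
proof -
  let ?c = "1 - \<bar>a\<bar>"
  have "(norm (x (Suc k)))\<^sup>2 \<le> \<bar>a\<bar> * (norm (x k))\<^sup>2 + (norm (d (Suc k)))\<^sup>2 / ?c" for k
  proof -
    have "norm (x (Suc k)) \<le> \<bar>a\<bar> * norm (x k) + norm (d (Suc k))"
      unfolding step by (rule norm_triangle_le) simp
    then have "(norm (x (Suc k)))\<^sup>2 \<le> (\<bar>a\<bar> * norm (x k) + norm (d (Suc k)))\<^sup>2"
      by (rule power_mono) simp
    also have "\<dots> \<le> \<bar>a\<bar> * (norm (x k))\<^sup>2 + (norm (d (Suc k)))\<^sup>2 / ?c"
      using a by (intro power2_add_le_weighted) auto
    finally show ?thesis .
  qed
  then have "(\<Sum>k=1..T. (norm (x k))\<^sup>2) \<le> (\<Sum>k=1..T. (norm (d k))\<^sup>2 / ?c) / ?c"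
    using a x0 by (intro sum_le_of_linear_recursion_le) auto
  then show ?thesis
    by (simp add: sum_divide_distrib power2_eq_square divide_divide_eq_left)
qed

(* The weights produce the constants 25/4 and 10 of the final bound. *)
lemma power2_sum3_le:
  fixes x y w :: real
  shows "(x + y + w)\<^sup>2 \<le> 25/8 * x\<^sup>2 + 50/9 * y\<^sup>2 + 2 * w\<^sup>2"
proof -
  have "(x + y + w)\<^sup>2 + (x + y - w)\<^sup>2 = 2 * (x + y)\<^sup>2 + 2 * w\<^sup>2"
    by (simp add: power2_eq_square algebra_simps)
  moreover have "(x + y)\<^sup>2 + (3/4 * x - 4/3 * y)\<^sup>2 = 25/16 * x\<^sup>2 + 25/9 * y\<^sup>2"
    by (simp add: power2_eq_square algebra_simps)
  moreover have "0 \<le> (x + y - w)\<^sup>2" "0 \<le> (3/4 * x - 4/3 * y)\<^sup>2"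
    by simp_all
  ultimately show ?thesis
    by linarith
qed

lemma leaky_difference_decomposition:
  fixes \<beta> :: real and z m R D S Y B :: "nat \<Rightarrow> real"
  assumes z1: "z 1 = m 1 + R 1 + Y 0"
    and z_step: "\<And>k. k \<ge> 1 \<Longrightarrow>
      z (Suc k) = (1 - \<beta>) * z k + (m (Suc k) + R (Suc k)) - (m k + R k) + D (Suc k)"
    and S0: "S 0 = 0" and S_step: "\<And>k. S (Suc k) = (1 - \<beta>) * S k + m (Suc k)"
    and Y_step: "\<And>j. Y (Suc j) = (1 - \<beta>) * Y j - \<beta> * R (Suc j)"
    and B0: "B 0 = 0" and B_step: "\<And>j. B (Suc j) = (1 - \<beta>) * B j + D (Suc (Suc j))"
  shows "z (Suc j) = (m (Suc j) - \<beta> * S j) + (R (Suc j) + Y j) + B j"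
proof (induction j)
  case 0
  then show ?case
    using z1 S0 B0 by simp
next
  case (Suc j)
  have "z (Suc (Suc j)) = (1 - \<beta>) * z (Suc j) + (m (Suc (Suc j)) + R (Suc (Suc j)))
      - (m (Suc j) + R (Suc j)) + D (Suc (Suc j))"
    using z_step[of "Suc j"] by simp
  then show ?case
    unfolding Suc.IH by (simp add: Y_step B_step S_step algebra_simps)
qed

lemma abs_leaky_recursion_le:
  fixes \<beta> \<rho> :: real and Y R :: "nat \<Rightarrow> real"
  assumes \<beta>: "0 < \<beta>" "\<beta> < 2" and Y0: "\<bar>Y 0\<bar> \<le> \<rho>"
    and Y_step: "\<And>j. Y (Suc j) = (1 - \<beta>) * Y j - \<beta> * R (Suc j)"
    and R: "\<And>k. k \<ge> 1 \<Longrightarrow> \<bar>R k\<bar> \<le> \<rho>"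
  shows "\<bar>Y j\<bar> \<le> (2 / (1 - \<bar>1 - \<beta>\<bar>) - 1) * \<rho>"
proof (induction j)
  case 0
  have "1 \<le> 2 / (1 - \<bar>1 - \<beta>\<bar>) - 1"
    using \<beta> by (simp add: field_simps)
  moreover have "0 \<le> \<rho>"
    using Y0 by (meson abs_ge_zero order_trans)
  ultimately show ?case
    using Y0 by (metis mult_1 mult_right_mono order_trans)
next
  case (Suc j)
  have "\<bar>Y (Suc j)\<bar> \<le> \<bar>1 - \<beta>\<bar> * \<bar>Y j\<bar> + \<beta> * \<bar>R (Suc j)\<bar>"
    unfolding Y_step using \<beta> by (simp add: abs_mult abs_triangle_ineq4[THEN order_trans])
  also have "\<dots> \<le> \<bar>1 - \<beta>\<bar> * ((2 / (1 - \<bar>1 - \<beta>\<bar>) - 1) * \<rho>) + (1 + \<bar>1 - \<beta>\<bar>) * \<rho>"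
    using Suc.IH R[of "Suc j"] \<beta> by (intro add_mono mult_mono) (auto simp: order_trans[OF abs_ge_zero])
  also have "\<dots> = (2 / (1 - \<bar>1 - \<beta>\<bar>) - 1) * \<rho>"
    using \<beta> by (simp add: field_simps)
  finally show ?case .
qed

lemma sq_leaky_difference_le:
  fixes \<beta> \<rho> :: real and z m R D S Y B :: "nat \<Rightarrow> real"
  defines "\<beta>' \<equiv> 1 - \<bar>1 - \<beta>\<bar>"
  assumes \<beta>: "0 < \<beta>" "\<beta> < 2"
    and z1: "z 1 = m 1 + R 1 + Y 0" and Y0: "\<bar>Y 0\<bar> \<le> \<rho>"
    and z_step: "\<And>k. k \<ge> 1 \<Longrightarrow>
      z (Suc k) = (1 - \<beta>) * z k + (m (Suc k) + R (Suc k)) - (m k + R k) + D (Suc k)"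
    and R: "\<And>k. k \<ge> 1 \<Longrightarrow> \<bar>R k\<bar> \<le> \<rho>"
    and S0: "S 0 = 0" and S_step: "\<And>k. S (Suc k) = (1 - \<beta>) * S k + m (Suc k)"
    and Y_step: "\<And>j. Y (Suc j) = (1 - \<beta>) * Y j - \<beta> * R (Suc j)"
    and B0: "B 0 = 0" and B_step: "\<And>j. B (Suc j) = (1 - \<beta>) * B j + D (Suc (Suc j))"
  shows "(z (Suc j))\<^sup>2 \<le> 25/8 * (m (Suc j) - \<beta> * S j)\<^sup>2 + 50/9 * (2 * \<rho> / \<beta>')\<^sup>2 + 2 * (B j)\<^sup>2"
proof -
  have "\<bar>Y j\<bar> \<le> (2 / \<beta>' - 1) * \<rho>"
    unfolding \<beta>'_def using \<beta> Y0 Y_step R by (rule abs_leaky_recursion_le)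
  then have "\<bar>R (Suc j) + Y j\<bar> \<le> \<rho> + (2 / \<beta>' - 1) * \<rho>"
    using R[of "Suc j"] abs_triangle_ineq[of "R (Suc j)" "Y j"] by linarith
  also have "\<dots> = 2 * \<rho> / \<beta>'"
    using \<beta> by (simp add: \<beta>'_def field_simps)
  finally have "(R (Suc j) + Y j)\<^sup>2 \<le> (2 * \<rho> / \<beta>')\<^sup>2"
    by (metis abs_ge_zero order_trans power2_abs power_mono)
  moreover have "z (Suc j) = (m (Suc j) - \<beta> * S j) + (R (Suc j) + Y j) + B j"
    using z1 z_step S0 S_step Y_step B0 B_step by (rule leaky_difference_decomposition)
  ultimately show ?thesis
    using power2_sum3_le[of "m (Suc j) - \<beta> * S j" "R (Suc j) + Y j" "B j"] by simp
qed

lemma sum_sq_leaky_difference_le: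
  fixes \<beta> \<rho> y :: real and z m R D S :: "nat \<Rightarrow> real"
  defines "\<beta>' \<equiv> 1 - \<bar>1 - \<beta>\<bar>"
  assumes \<beta>: "0 < \<beta>" "\<beta> < 2"
    and z1: "z 1 = m 1 + R 1 + y" and y: "\<bar>y\<bar> \<le> \<rho>"
    and z_step: "\<And>k. k \<ge> 1 \<Longrightarrow>
      z (Suc k) = (1 - \<beta>) * z k + (m (Suc k) + R (Suc k)) - (m k + R k) + D (Suc k)"
    and R: "\<And>k. k \<ge> 1 \<Longrightarrow> \<bar>R k\<bar> \<le> \<rho>"
    and S0: "S 0 = 0" and S_step: "\<And>k. S (Suc k) = (1 - \<beta>) * S k + m (Suc k)"
  shows "(\<Sum>k=1..T. (z k)\<^sup>2) \<le> 25/8 * (\<Sum>k=1..T. (m k - \<beta> * S (k - 1))\<^sup>2)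
      + 50/9 * real T * (2 * \<rho> / \<beta>')\<^sup>2 + 2 / \<beta>'\<^sup>2 * (\<Sum>k=1..T. (D (Suc k))\<^sup>2)"
proof -
  define Y where "Y = rec_nat y (\<lambda>j y. (1 - \<beta>) * y - \<beta> * R (Suc j))"
  define B where "B = rec_nat 0 (\<lambda>j b. (1 - \<beta>) * b + D (Suc (Suc j)))"
  have Y_simps: "Y 0 = y" "\<And>j. Y (Suc j) = (1 - \<beta>) * Y j - \<beta> * R (Suc j)"
    and B_simps: "B 0 = 0" "\<And>j. B (Suc j) = (1 - \<beta>) * B j + D (Suc (Suc j))"
    by (simp_all add: Y_def B_def)
  have "(z (Suc j))\<^sup>2 \<le> 25/8 * (m (Suc j) - \<beta> * S j)\<^sup>2 + 50/9 * (2 * \<rho> / \<beta>')\<^sup>2 + 2 * (B j)\<^sup>2" for j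
    unfolding \<beta>'_def using \<beta> _ _ z_step R S0 S_step Y_simps(2) B_simps
    by (rule sq_leaky_difference_le) (use z1 y in \<open>simp_all add: Y_simps(1)\<close>)
  then have "(\<Sum>k=1..T. (z k)\<^sup>2) \<le> (\<Sum>k<T. 25/8 * (m (Suc k) - \<beta> * S k)\<^sup>2
      + 50/9 * (2 * \<rho> / \<beta>')\<^sup>2 + 2 * (B k)\<^sup>2)"
    by (simp add: sum.atLeast1_atMost_eq sum_mono)
  also have "\<dots> = 25/8 * (\<Sum>k=1..T. (m k - \<beta> * S (k - 1))\<^sup>2)
      + 50/9 * real T * (2 * \<rho> / \<beta>')\<^sup>2 + 2 * (\<Sum>k<T. (B k)\<^sup>2)"
    by (simp add: sum.distrib sum_distrib_left sum.atLeast1_atMost_eq)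
  also have "(\<Sum>k<T. (B k)\<^sup>2) \<le> (\<Sum>k=1..T. (B k)\<^sup>2)"
    using B_simps(1) by (intro sum_lessThan_le_sum_atLeast1) auto
  also have "\<dots> \<le> (\<Sum>k=1..T. (D (Suc k))\<^sup>2) / \<beta>'\<^sup>2"
    using sum_norm_linear_recursion_le[of "1 - \<beta>" B "\<lambda>k. D (Suc k)" T] \<beta> B_simps
    by (simp add: \<beta>'_def)
  finally show ?thesis
    by (simp add: divide_simps)
qed

lemma has_real_derivative_along_line:
  fixes f :: "'a::real_inner \<Rightarrow> real"
  assumes deriv: "\<And>x. (f has_derivative (\<lambda>h. grad x \<bullet> h)) (at x)"
  shows "((\<lambda>t. f (x + t *\<^sub>R h)) has_real_derivative grad (x + t *\<^sub>R h) \<bullet> h) (at t)"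
proof -
  have "((\<lambda>t. x + t *\<^sub>R h) has_derivative (\<lambda>s. s *\<^sub>R h)) (at t)"
    by (auto intro!: derivative_eq_intros)
  from has_derivative_compose[OF this deriv]
  have "((\<lambda>t. f (x + t *\<^sub>R h)) has_derivative (\<lambda>s. grad (x + t *\<^sub>R h) \<bullet> (s *\<^sub>R h))) (at t)" .
  moreover have "(\<lambda>s. grad (x + t *\<^sub>R h) \<bullet> (s *\<^sub>R h)) = (\<lambda>s. (grad (x + t *\<^sub>R h) \<bullet> h) * s)"
    by (auto simp: fun_eq_iff)
  ultimately show ?thesis
    by (simp add: has_field_derivative_def)
qed

lemma abs_first_order_remainder_le:
  fixes f :: "'a::real_inner \<Rightarrow> real"
  assumes deriv: "\<And>x. (f has_derivative (\<lambda>h. grad x \<bullet> h)) (at x)"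
    and lipschitz: "\<And>x y. norm (grad x - grad y) \<le> L * norm (x - y)"
  shows "\<bar>f (x + h) - f x - grad x \<bullet> h\<bar> \<le> L / 2 * (norm h)\<^sup>2"
proof -
  define \<phi> where "\<phi> t = f (x + t *\<^sub>R h) - t * (grad x \<bullet> h)" for t
  have \<phi>: "(\<phi> has_real_derivative (grad (x + t *\<^sub>R h) - grad x) \<bullet> h) (at t)" for t
    unfolding \<phi>_def
    by (auto intro!: derivative_eq_intros has_real_derivative_along_line[OF deriv] simp: inner_diff_left)
  have \<phi>'_bound: "\<bar>(grad (x + t *\<^sub>R h) - grad x) \<bullet> h\<bar> \<le> L * t * (norm h)\<^sup>2" if "0 \<le> t" for t
  proof -
    have "\<bar>(grad (x + t *\<^sub>R h) - grad x) \<bullet> h\<bar> \<le> norm (grad (x + t *\<^sub>R h) - grad x) * norm h"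
      by (rule Cauchy_Schwarz_ineq2)
    also have "\<dots> \<le> L * norm (t *\<^sub>R h) * norm h"
      using lipschitz[of "x + t *\<^sub>R h" x] by (intro mult_right_mono) auto
    finally show ?thesis
      using that by (simp add: power2_eq_square mult.assoc)
  qed
  have "(\<lambda>t. \<phi> t - L / 2 * t\<^sup>2 * (norm h)\<^sup>2) 1 \<le> (\<lambda>t. \<phi> t - L / 2 * t\<^sup>2 * (norm h)\<^sup>2) 0"
  proof (rule DERIV_nonpos_imp_nonincreasing[of 0 1])
    fix t :: real assume "0 \<le> t"
    have "((\<lambda>t. \<phi> t - L / 2 * t\<^sup>2 * (norm h)\<^sup>2) has_real_derivative
        (grad (x + t *\<^sub>R h) - grad x) \<bullet> h - L * t * (norm h)\<^sup>2) (at t)"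
      by (auto intro!: derivative_eq_intros \<phi> simp: power2_eq_square)
    with \<phi>'_bound[of t] \<open>0 \<le> t\<close>
    show "\<exists>y. ((\<lambda>t. \<phi> t - L / 2 * t\<^sup>2 * (norm h)\<^sup>2) has_real_derivative y) (at t) \<and> y \<le> 0"
      by (auto simp: abs_le_iff)
  qed simp
  moreover have "(\<lambda>t. \<phi> t + L / 2 * t\<^sup>2 * (norm h)\<^sup>2) 0 \<le> (\<lambda>t. \<phi> t + L / 2 * t\<^sup>2 * (norm h)\<^sup>2) 1"
  proof (rule DERIV_nonneg_imp_nondecreasing[of 0 1])
    fix t :: real assume "0 \<le> t"
    have "((\<lambda>t. \<phi> t + L / 2 * t\<^sup>2 * (norm h)\<^sup>2) has_real_derivative
        (grad (x + t *\<^sub>R h) - grad x) \<bullet> h + L * t * (norm h)\<^sup>2) (at t)"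
      by (auto intro!: derivative_eq_intros \<phi> simp: power2_eq_square)
    with \<phi>'_bound[of t] \<open>0 \<le> t\<close>
    show "\<exists>y. ((\<lambda>t. \<phi> t + L / 2 * t\<^sup>2 * (norm h)\<^sup>2) has_real_derivative y) (at t) \<and> 0 \<le> y"
      by (auto simp: abs_le_iff)
  qed simp
  ultimately have "f (x + h) - grad x \<bullet> h - L / 2 * (norm h)\<^sup>2 \<le> f x"
    "f x \<le> f (x + h) - grad x \<bullet> h + L / 2 * (norm h)\<^sup>2"
    by (simp_all add: \<phi>_def)
  then show ?thesis
    by (simp only: abs_le_iff) linarith
qed

lemma power2_one_minus_abs_le:
  fixes \<beta> :: real
  assumes "0 < \<beta>" "\<beta> < 2"
  shows "(1 - \<bar>1 - \<beta>\<bar>)\<^sup>2 \<le> 2 - \<beta>"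
proof -
  have "(1 - \<bar>1 - \<beta>\<bar>) * (1 - \<bar>1 - \<beta>\<bar>) \<le> 1 * (1 - \<bar>1 - \<beta>\<bar>)"
    using assms by (intro mult_right_mono) auto
  moreover have "1 - \<bar>1 - \<beta>\<bar> \<le> 2 - \<beta>"
    by simp
  ultimately show ?thesis
    unfolding power2_eq_square mult_1 by (rule order_trans)
qed

lemma le_divide_of_coupled_le:
  fixes x y a k c \<theta> :: real
  assumes "x \<le> a + k * y" and "y \<le> c * x" and "0 \<le> k" and "k * c = 1 - \<theta>" and "0 < \<theta>"
  shows "x \<le> a / \<theta>"
proof -
  have "k * y \<le> (1 - \<theta>) * x"
    using mult_left_mono[OF assms(2,3)] assms(4) by (simp add: mult.assoc[symmetric])
  then show ?thesis
    using assms(1,5) by (simp add: field_simps)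
qed

definition unit_sequences :: "(nat \<Rightarrow> 'a::real_normed_vector) set" where
  "unit_sequences = {u. \<forall>i. norm (u i) = 1}"

lemma bounded_component_unit_sequences: "bounded ((\<lambda>u. u k) ` unit_sequences)"
  by (auto simp: bounded_iff unit_sequences_def)

lemma bounded_const_comp: "bounded ((\<lambda>x. c :: 'a::real_normed_vector) ` S)"
  unfolding bounded_iff by (auto intro: exI[of _ "norm c"])

lemma bounded_bilinear_comp:
  assumes "bounded_bilinear h" and "bounded (f ` S)" and "bounded (g ` S)"
  shows "bounded ((\<lambda>x. h (f x) (g x)) ` S)"
proof -
  interpret bounded_bilinear h
    by fact
  obtain K where K: "0 < K" "\<And>a b. norm (h a b) \<le> norm a * norm b * K"
    using pos_bounded by blast
  obtain B C where "\<forall>x\<in>S. norm (f x) \<le> B" "\<forall>x\<in>S. norm (g x) \<le> C"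
    using assms(2,3) by (auto simp: bounded_iff)
  then have "norm (h (f x) (g x)) \<le> B * C * K" if "x \<in> S" for x
    using K(2)[of "f x" "g x"] that K(1)
    by (smt (verit) mult_mono mult_right_mono norm_ge_zero)
  then show ?thesis
    by (auto simp: bounded_iff)
qed

lemma bounded_mult_comp:
  fixes g h :: "'a \<Rightarrow> real"
  shows "bounded (g ` S) \<Longrightarrow> bounded (h ` S) \<Longrightarrow> bounded ((\<lambda>x. g x * h x) ` S)"
  by (rule bounded_bilinear_comp[OF bounded_bilinear_mult])

lemma bounded_power2_comp:
  fixes g :: "'a \<Rightarrow> real"
  shows "bounded (g ` S) \<Longrightarrow> bounded ((\<lambda>x. (g x)\<^sup>2) ` S)"
  using bounded_mult_comp[of g S g] by (simp add: power2_eq_square)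

section \<open>The iterates of HLF-SZO\<close>

locale hlf_szo =
  fixes f :: "'a::euclidean_space \<Rightarrow> real" and grad :: "'a \<Rightarrow> 'a"
    and G L \<alpha> \<beta> \<eta> r :: real and x1 :: 'a
  assumes lipschitz: "\<And>x y. \<bar>f x - f y\<bar> \<le> G * norm (x - y)"
    and deriv: "\<And>x. (f has_derivative (\<lambda>h. grad x \<bullet> h)) (at x)"
    and smooth: "\<And>x y. norm (grad x - grad y) \<le> L * norm (x - y)"
    and \<alpha>: "0 \<le> \<alpha>" "\<alpha> < 1" and \<beta>: "0 < \<beta>" "\<beta> < 2" and r: "0 < r"
begin

abbreviation "xk u k \<equiv> hlf_x f \<alpha> \<beta> \<eta> r x1 u k"
abbreviation "zk u k \<equiv> hlf_z f \<alpha> \<beta> \<eta> r x1 u k"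
abbreviation "pk u k \<equiv> hlf_p f \<alpha> \<beta> \<eta> r x1 u k"
abbreviation "gk u k \<equiv> hlf_g f \<alpha> \<beta> \<eta> r x1 u k"

lemma xk_0: "xk u 0 = x1" and zk_0: "zk u 0 = 0" and pk_0: "pk u 0 = 0"
  by (simp_all add: hlf_x_def hlf_z_def hlf_p_def)

lemma xk_Suc: "xk u (Suc k) = xk u k - pk u k"
  by (simp add: hlf_x_def hlf_p_def Let_def split: prod.split)

lemma xk_1: "xk u (Suc 0) = x1"
  by (simp add: xk_Suc xk_0 pk_0)

lemma zk_1: "zk u (Suc 0) = (f (x1 + r *\<^sub>R u 1) - f (x1 - r *\<^sub>R u 1)) / 2"
  by (simp add: hlf_x_def hlf_z_def hlf_p_def Let_def split: prod.split)

lemma zk_Suc: "k \<ge> 1 \<Longrightarrow>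
    zk u (Suc k) = (1 - \<beta>) * zk u k + f (xk u (Suc k) + r *\<^sub>R u (Suc k)) - f (xk u k + r *\<^sub>R u k)"
  by (simp add: hlf_x_def hlf_z_def hlf_p_def Let_def split: prod.split)

lemma gk_eq: "gk u k = (DIM('a) / r * zk u k) *\<^sub>R u k"
  by (simp add: hlf_g_def hlf_z_def)

lemma pk_Suc: "pk u (Suc k) = \<alpha> *\<^sub>R pk u k + \<eta> *\<^sub>R gk u (Suc k)"
  by (simp add: hlf_x_def hlf_z_def hlf_p_def hlf_g_def Let_def split: prod.split)

lemma G_nonneg: "0 \<le> G"
proof -
  obtain b :: 'a where "norm b = 1"
    using vector_choose_size[of 1] by auto
  with lipschitz[of 0 b] show ?thesis
    by simp
qed

lemma L_nonneg: "0 \<le> L"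
proof -
  obtain b :: 'a where "norm b = 1"
    using vector_choose_size[of 1] by auto
  with smooth[of 0 b] show ?thesis
    by (simp add: order_trans[OF norm_ge_zero])
qed

lemma borel_measurable_f [measurable]: "f \<in> borel_measurable borel"
proof -
  have "continuous_on UNIV f"
    using deriv has_derivative_continuous continuous_at_imp_continuous_on by blast
  then show ?thesis
    by (rule borel_measurable_continuous_onI)
qed

lemma borel_measurable_grad [measurable]: "grad \<in> borel_measurable borel"
proof (intro borel_measurable_continuous_onI lipschitz_on_continuous_on)
  show "L-lipschitz_on UNIV grad"
    using L_nonneg smooth by (auto intro!: lipschitz_onI simp: dist_norm)
qed

lemma bounded_f_comp: "bounded (A ` S) \<Longrightarrow> bounded ((\<lambda>x. f (A x)) ` S)"
proof -
  assume "bounded (A ` S)"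
  then obtain B where "\<forall>x\<in>S. norm (A x) \<le> B"
    by (auto simp: bounded_iff)
  moreover have "\<bar>f (A x)\<bar> \<le> \<bar>f 0\<bar> + G * norm (A x)" for x
    using lipschitz[of "A x" 0] by simp
  ultimately have "\<forall>x\<in>S. \<bar>f (A x)\<bar> \<le> \<bar>f 0\<bar> + G * B"
    using G_nonneg by (smt (verit) mult_left_mono)
  then show ?thesis
    by (auto simp: bounded_real)
qed

lemma bounded_grad_comp: "bounded (A ` S) \<Longrightarrow> bounded ((\<lambda>x. grad (A x)) ` S)"
proof -
  assume "bounded (A ` S)"
  then obtain B where "\<forall>x\<in>S. norm (A x) \<le> B"
    by (auto simp: bounded_iff)
  moreover have "norm (grad (A x)) \<le> norm (grad 0) + L * norm (A x)" for x
    using smooth[of "A x" 0] norm_triangle_sub[of "grad (A x)" "grad 0"] by simp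
  ultimately have "\<forall>x\<in>S. norm (grad (A x)) \<le> norm (grad 0) + L * B"
    using L_nonneg by (smt (verit) mult_left_mono)
  then show ?thesis
    by (auto simp: bounded_iff)
qed

lemma measurable_iterates:
  fixes V :: "nat \<Rightarrow> 'm \<Rightarrow> 'a"
  assumes [measurable]: "\<And>i. V i \<in> borel_measurable N"
  shows "(\<lambda>\<omega>. xk (\<lambda>i. V i \<omega>) k) \<in> borel_measurable N
    \<and> (\<lambda>\<omega>. zk (\<lambda>i. V i \<omega>) k) \<in> borel_measurable N
    \<and> (\<lambda>\<omega>. pk (\<lambda>i. V i \<omega>) k) \<in> borel_measurable N"
proof (induction k)
  case 0
  then show ?case
    by (simp add: xk_0 zk_0 pk_0)
next
  case (Suc k)
  then have [measurable]: "(\<lambda>\<omega>. xk (\<lambda>i. V i \<omega>) k) \<in> borel_measurable N"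
    "(\<lambda>\<omega>. zk (\<lambda>i. V i \<omega>) k) \<in> borel_measurable N" "(\<lambda>\<omega>. pk (\<lambda>i. V i \<omega>) k) \<in> borel_measurable N"
    by auto
  have [measurable]: "(\<lambda>\<omega>. xk (\<lambda>i. V i \<omega>) (Suc k)) \<in> borel_measurable N"
    unfolding xk_Suc by measurable
  have [measurable]: "(\<lambda>\<omega>. zk (\<lambda>i. V i \<omega>) (Suc k)) \<in> borel_measurable N"
    by (cases "k = 0") (simp_all add: zk_1 zk_Suc)
  have "(\<lambda>\<omega>. pk (\<lambda>i. V i \<omega>) (Suc k)) \<in> borel_measurable N"
    unfolding pk_Suc gk_eq by measurable
  then show ?case
    by simp
qed

lemma measurable_xk [measurable]:
    "(\<And>i. V i \<in> borel_measurable N) \<Longrightarrow> (\<lambda>\<omega>. xk (\<lambda>i. V i \<omega>) k) \<in> borel_measurable N"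
  and measurable_zk [measurable]:
    "(\<And>i. V i \<in> borel_measurable N) \<Longrightarrow> (\<lambda>\<omega>. zk (\<lambda>i. V i \<omega>) k) \<in> borel_measurable N"
  and measurable_pk [measurable]:
    "(\<And>i. V i \<in> borel_measurable N) \<Longrightarrow> (\<lambda>\<omega>. pk (\<lambda>i. V i \<omega>) k) \<in> borel_measurable N"
  using measurable_iterates by blast+

lemma measurable_gk [measurable]:
  "(\<And>i. V i \<in> borel_measurable N) \<Longrightarrow> (\<lambda>\<omega>. gk (\<lambda>i. V i \<omega>) k) \<in> borel_measurable N"
  unfolding gk_eq by measurable

lemma iterates_local:
  assumes "\<And>i. 1 \<le> i \<Longrightarrow> i \<le> k \<Longrightarrow> u i = v i"
  shows "xk u k = xk v k \<and> zk u k = zk v k \<and> pk u k = pk v k"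
  using assms
proof (induction k)
  case 0
  then show ?case
    by (simp add: xk_0 zk_0 pk_0)
next
  case (Suc k)
  then have IH: "xk u k = xk v k" "zk u k = zk v k" "pk u k = pk v k"
    by auto
  have x: "xk u (Suc k) = xk v (Suc k)"
    by (simp add: xk_Suc IH)
  moreover have z: "zk u (Suc k) = zk v (Suc k)"
    using x IH Suc.prems by (cases "k = 0") (simp_all add: zk_1 zk_Suc)
  moreover have "pk u (Suc k) = pk v (Suc k)"
    using IH z Suc.prems by (simp add: pk_Suc gk_eq)
  ultimately show ?case
    by blast
qed

lemma xk_local:
  assumes "\<And>i. 1 \<le> i \<Longrightarrow> i < k \<Longrightarrow> u i = v i"
  shows "xk u k = xk v k"
proof (cases k)
  case (Suc j)
  then have "xk u j = xk v j" "pk u j = pk v j"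
    using iterates_local[of j u v] assms by auto
  then show ?thesis
    by (simp add: Suc xk_Suc)
qed (simp add: xk_0)

lemma bounded_iterates:
  "bounded ((\<lambda>u. xk u k) ` unit_sequences) \<and> bounded ((\<lambda>u. zk u k) ` unit_sequences)
    \<and> bounded ((\<lambda>u. pk u k) ` unit_sequences)"
proof (induction k)
  case 0
  then show ?case
    by (simp add: xk_0 zk_0 pk_0 bounded_const_comp)
next
  case (Suc k)
  then have x: "bounded ((\<lambda>u. xk u k) ` unit_sequences)"
    and z: "bounded ((\<lambda>u. zk u k) ` unit_sequences)"
    and p: "bounded ((\<lambda>u. pk u k) ` unit_sequences)"
    by auto
  have step: "bounded ((\<lambda>u. y u + c *\<^sub>R u j) ` unit_sequences)"
    if "bounded (y ` unit_sequences)" for y :: "(nat \<Rightarrow> 'a) \<Rightarrow> 'a" and c j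
    using that by (intro bounded_plus_comp bounded_scaleR_comp bounded_component_unit_sequences)
  have x': "bounded ((\<lambda>u. xk u (Suc k)) ` unit_sequences)"
    unfolding xk_Suc using x p by (rule bounded_minus_comp)
  moreover have z': "bounded ((\<lambda>u. zk u (Suc k)) ` unit_sequences)"
  proof (cases "k = 0")
    case True
    have "bounded ((\<lambda>u. (1 / 2) * (f (x1 + r *\<^sub>R u 1) - f (x1 + (- r) *\<^sub>R u 1))) ` unit_sequences)"
      by (intro bounded_mult_comp bounded_const_comp bounded_minus_comp bounded_f_comp step)
    then show ?thesis
      using True by (simp add: zk_1)
  next
    case False
    have "bounded ((\<lambda>u. (1 - \<beta>) * zk u k + f (xk u (Suc k) + r *\<^sub>R u (Suc k)) - f (xk u k + r *\<^sub>R u k)) ` unit_sequences)"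
      using x x' z by (intro bounded_minus_comp bounded_plus_comp bounded_mult_comp bounded_const_comp
          bounded_f_comp step)
    then show ?thesis
      using False by (simp add: zk_Suc)
  qed
  moreover have "bounded ((\<lambda>u. pk u (Suc k)) ` unit_sequences)"
    unfolding pk_Suc gk_eq using p z'
    by (intro bounded_plus_comp bounded_scaleR_comp bounded_bilinear_comp[OF bounded_bilinear_scaleR]
        bounded_mult_comp bounded_const_comp bounded_component_unit_sequences)
  ultimately show ?case
    by blast
qed

definition mk :: "(nat \<Rightarrow> 'a) \<Rightarrow> nat \<Rightarrow> real" where
  "mk u k = r * (grad (xk u k) \<bullet> u k)"

primrec sk :: "(nat \<Rightarrow> 'a) \<Rightarrow> nat \<Rightarrow> real" where
  "sk u 0 = 0"
| "sk u (Suc k) = (1 - \<beta>) * sk u k + mk u (Suc k)"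

definition qk :: "(nat \<Rightarrow> 'a) \<Rightarrow> nat \<Rightarrow> real" where
  "qk u k = mk u k - \<beta> * sk u (k - 1)"

lemma measurable_mk [measurable]:
  assumes [measurable]: "\<And>i. V i \<in> borel_measurable N"
  shows "(\<lambda>\<omega>. mk (\<lambda>i. V i \<omega>) k) \<in> borel_measurable N"
  unfolding mk_def by measurable

lemma measurable_sk [measurable]:
  assumes [measurable]: "\<And>i. V i \<in> borel_measurable N"
  shows "(\<lambda>\<omega>. sk (\<lambda>i. V i \<omega>) k) \<in> borel_measurable N"
  by (induction k) simp_all

lemma measurable_qk [measurable]:
  assumes [measurable]: "\<And>i. V i \<in> borel_measurable N"
  shows "(\<lambda>\<omega>. qk (\<lambda>i. V i \<omega>) k) \<in> borel_measurable N"
  unfolding qk_def by measurable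

lemma sk_local:
  assumes "\<And>i. 1 \<le> i \<Longrightarrow> i \<le> k \<Longrightarrow> u i = v i"
  shows "sk u k = sk v k"
  using assms
proof (induction k)
  case (Suc k)
  have "xk u (Suc k) = xk v (Suc k)"
    using Suc.prems by (intro xk_local) auto
  then show ?case
    using Suc by (simp add: mk_def)
qed simp

lemma bounded_mk: "bounded ((\<lambda>u. mk u k) ` unit_sequences)"
  unfolding mk_def using bounded_iterates
  by (intro bounded_mult_comp bounded_const_comp bounded_bilinear_comp[OF bounded_bilinear_inner]
      bounded_grad_comp bounded_component_unit_sequences) auto

lemma bounded_sk: "bounded ((\<lambda>u. sk u k) ` unit_sequences)"
  by (induction k)
     (simp_all add: bounded_const_comp bounded_plus_comp bounded_mult_comp bounded_mk)

lemma bounded_qk: "bounded ((\<lambda>u. qk u k) ` unit_sequences)"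
  unfolding qk_def
  by (intro bounded_minus_comp bounded_mult_comp bounded_const_comp bounded_mk bounded_sk)

lemma sum_norm_pk_le:
  "(\<Sum>k=1..T. (norm (pk u k))\<^sup>2) \<le> 2 * \<eta>\<^sup>2 * (1 + \<alpha>\<^sup>2) / (1 - \<alpha>\<^sup>2)\<^sup>2 * (\<Sum>k=1..T. (norm (gk u k))\<^sup>2)"
proof -
  have "(\<Sum>k=1..T. (norm (pk u k))\<^sup>2) \<le> (\<Sum>k=1..T. (norm (\<eta> *\<^sub>R gk u k))\<^sup>2) / (1 - \<bar>\<alpha>\<bar>)\<^sup>2"
    using \<alpha> by (intro sum_norm_linear_recursion_le) (simp_all add: pk_0 pk_Suc)
  also have "\<dots> = \<eta>\<^sup>2 / (1 - \<alpha>)\<^sup>2 * (\<Sum>k=1..T. (norm (gk u k))\<^sup>2)"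
    using \<alpha> by (simp add: power_mult_distrib sum_distrib_left sum_divide_distrib)
  also have "\<dots> \<le> 2 * \<eta>\<^sup>2 * (1 + \<alpha>\<^sup>2) / (1 - \<alpha>\<^sup>2)\<^sup>2 * (\<Sum>k=1..T. (norm (gk u k))\<^sup>2)"
  proof (intro mult_right_mono sum_nonneg)
    have "2 * (1 + \<alpha>\<^sup>2) - (1 + \<alpha>)\<^sup>2 = (1 - \<alpha>)\<^sup>2"
      by (simp add: power2_eq_square algebra_simps)
    then have "(1 + \<alpha>)\<^sup>2 \<le> 2 * (1 + \<alpha>\<^sup>2)"
      by (metis diff_ge_0_iff_ge zero_le_power2)
    have "\<eta>\<^sup>2 / (1 - \<alpha>)\<^sup>2 = \<eta>\<^sup>2 * (1 + \<alpha>)\<^sup>2 / ((1 - \<alpha>)\<^sup>2 * (1 + \<alpha>)\<^sup>2)"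
      using \<alpha> by simp
    also have "\<dots> \<le> \<eta>\<^sup>2 * (2 * (1 + \<alpha>\<^sup>2)) / ((1 - \<alpha>)\<^sup>2 * (1 + \<alpha>)\<^sup>2)"
      using \<open>(1 + \<alpha>)\<^sup>2 \<le> 2 * (1 + \<alpha>\<^sup>2)\<close> by (intro divide_right_mono mult_left_mono) auto
    also have "(1 - \<alpha>)\<^sup>2 * (1 + \<alpha>)\<^sup>2 = (1 - \<alpha>\<^sup>2)\<^sup>2"
      by (simp add: power2_eq_square algebra_simps)
    finally show "\<eta>\<^sup>2 / (1 - \<alpha>)\<^sup>2 \<le> 2 * \<eta>\<^sup>2 * (1 + \<alpha>\<^sup>2) / (1 - \<alpha>\<^sup>2)\<^sup>2"
      by (simp add: algebra_simps)
  qed simp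
  finally show ?thesis .
qed

lemma abs_taylor_remainder_le:
  "norm v = 1 \<Longrightarrow> \<bar>f (x + r *\<^sub>R v) - f x - r * (grad x \<bullet> v)\<bar> \<le> L * r\<^sup>2 / 2"
  using abs_first_order_remainder_le[OF deriv smooth, of x "r *\<^sub>R v"] r by simp

lemma abs_zk_1_sub_le:
  assumes "norm (u 1) = 1"
  shows "\<bar>zk u 1 - (f (x1 + r *\<^sub>R u 1) - f x1)\<bar> \<le> L * r\<^sup>2 / 2"
proof -
  define A where "A = f (x1 + r *\<^sub>R u 1) - f x1 - r * (grad x1 \<bullet> u 1)"
  define B where "B = f (x1 + r *\<^sub>R (- u 1)) - f x1 - r * (grad x1 \<bullet> (- u 1))"
  have "\<bar>A\<bar> \<le> L * r\<^sup>2 / 2" "\<bar>B\<bar> \<le> L * r\<^sup>2 / 2"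
    using abs_taylor_remainder_le[of "u 1" x1] abs_taylor_remainder_le[of "- u 1" x1] assms
    by (simp_all add: A_def B_def)
  moreover have "zk u 1 - (f (x1 + r *\<^sub>R u 1) - f x1) = - (A + B) / 2"
    by (simp add: A_def B_def zk_1 field_simps)
  ultimately show ?thesis
    by (simp only:) (auto simp: abs_le_iff)
qed

lemma sum_zk_sq_le:
  assumes u: "u \<in> unit_sequences"
  shows "(\<Sum>k=1..T. (zk u k)\<^sup>2) \<le> 25/8 * (\<Sum>k=1..T. (qk u k)\<^sup>2)
    + 50/9 * real T * (L * r\<^sup>2 / (1 - \<bar>1 - \<beta>\<bar>))\<^sup>2
    + 2 / (1 - \<bar>1 - \<beta>\<bar>)\<^sup>2 * (\<Sum>k=1..T. (f (xk u (Suc k)) - f (xk u k))\<^sup>2)"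
proof -
  have norm_u: "norm (u k) = 1" for k
    using u by (simp add: unit_sequences_def)
  define R where "R k = f (xk u k + r *\<^sub>R u k) - f (xk u k) - mk u k" for k
  have "(\<Sum>k=1..T. (zk u k)\<^sup>2) \<le> 25/8 * (\<Sum>k=1..T. (mk u k - \<beta> * sk u (k - 1))\<^sup>2)
      + 50/9 * real T * (2 * (L * r\<^sup>2 / 2) / (1 - \<bar>1 - \<beta>\<bar>))\<^sup>2
      + 2 / (1 - \<bar>1 - \<beta>\<bar>)\<^sup>2 * (\<Sum>k=1..T. (f (xk u (Suc k)) - f (xk u (Suc k - 1)))\<^sup>2)"
  proof (rule sum_sq_leaky_difference_le[where R = R and y = "zk u 1 - (f (x1 + r *\<^sub>R u 1) - f x1)"])
    show "zk u (Suc k) = (1 - \<beta>) * zk u k + (mk u (Suc k) + R (Suc k)) - (mk u k + R k)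
        + (f (xk u (Suc k)) - f (xk u (Suc k - 1)))" if "k \<ge> 1" for k
      using that by (simp add: zk_Suc R_def)
    show "\<bar>R k\<bar> \<le> L * r\<^sup>2 / 2" for k
      using abs_taylor_remainder_le[OF norm_u] by (simp add: R_def mk_def)
    show "\<bar>zk u 1 - (f (x1 + r *\<^sub>R u 1) - f x1)\<bar> \<le> L * r\<^sup>2 / 2"
      by (rule abs_zk_1_sub_le[OF norm_u])
  qed (simp_all add: \<beta> R_def xk_1)
  then show ?thesis
    by (simp add: qk_def)
qed

lemma sum_norm_gk_le:
  assumes u: "u \<in> unit_sequences"
  shows "(\<Sum>k=1..T. (norm (gk u k))\<^sup>2) \<le> (DIM('a) / r)\<^sup>2 * (25/8 * (\<Sum>k=1..T. (qk u k)\<^sup>2)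
    + 50/9 * real T * (L * r\<^sup>2 / (1 - \<bar>1 - \<beta>\<bar>))\<^sup>2
    + 2 / (1 - \<bar>1 - \<beta>\<bar>)\<^sup>2 * G\<^sup>2 * (\<Sum>k=1..T. (norm (pk u k))\<^sup>2))"
proof -
  have "(f (xk u (Suc k)) - f (xk u k))\<^sup>2 \<le> G\<^sup>2 * (norm (pk u k))\<^sup>2" for k
  proof -
    have "\<bar>f (xk u (Suc k)) - f (xk u k)\<bar> \<le> G * norm (pk u k)"
      using lipschitz[of "xk u (Suc k)" "xk u k"] by (simp add: xk_Suc)
    then show ?thesis
      by (metis abs_ge_zero order_trans power2_abs power_mono power_mult_distrib)
  qed
  then have "(\<Sum>k=1..T. (f (xk u (Suc k)) - f (xk u k))\<^sup>2) \<le> G\<^sup>2 * (\<Sum>k=1..T. (norm (pk u k))\<^sup>2)"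
    by (simp add: sum_distrib_left sum_mono)
  with sum_zk_sq_le[OF u, of T]
  have "(\<Sum>k=1..T. (zk u k)\<^sup>2) \<le> 25/8 * (\<Sum>k=1..T. (qk u k)\<^sup>2)
      + 50/9 * real T * (L * r\<^sup>2 / (1 - \<bar>1 - \<beta>\<bar>))\<^sup>2
      + 2 / (1 - \<bar>1 - \<beta>\<bar>)\<^sup>2 * G\<^sup>2 * (\<Sum>k=1..T. (norm (pk u k))\<^sup>2)"
    by (smt (verit) divide_nonneg_nonneg mult.assoc mult_left_mono zero_le_power2)
  moreover have "(\<Sum>k=1..T. (norm (gk u k))\<^sup>2) = (DIM('a) / r)\<^sup>2 * (\<Sum>k=1..T. (zk u k)\<^sup>2)"
    using u by (simp add: gk_eq unit_sequences_def sum_distrib_left power_mult_distrib power_divide)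
  ultimately show ?thesis
    by (simp add: mult_left_mono)
qed

lemma iterates_cong:
  assumes "\<And>i. 1 \<le> i \<Longrightarrow> u i = v i"
  shows "xk u k = xk v k" and "pk u k = pk v k" and "gk u k = gk v k"
proof -
  have "xk u k = xk v k \<and> zk u k = zk v k \<and> pk u k = pk v k"
    using assms by (intro iterates_local) auto
  moreover have "u k = v k \<or> zk u k = 0"
    using assms by (cases k) (auto simp: zk_0)
  ultimately show "xk u k = xk v k" "pk u k = pk v k" "gk u k = gk v k"
    by (auto simp: gk_eq)
qed

lemma integrals_iterates_cong:
  fixes U V :: "nat \<Rightarrow> 'm \<Rightarrow> 'a"
  assumes AE: "AE \<omega> in M. \<forall>i\<ge>1. V i \<omega> = U i \<omega>"
    and U: "\<And>i. i \<ge> 1 \<Longrightarrow> U i \<in> borel_measurable M" and V: "\<And>i. V i \<in> borel_measurable M"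
  shows "(\<integral>\<omega>. (norm (gk (\<lambda>i. U i \<omega>) k))\<^sup>2 \<partial>M) = (\<integral>\<omega>. (norm (gk (\<lambda>i. V i \<omega>) k))\<^sup>2 \<partial>M)"
    and "(\<integral>\<omega>. (norm (pk (\<lambda>i. U i \<omega>) k))\<^sup>2 \<partial>M) = (\<integral>\<omega>. (norm (pk (\<lambda>i. V i \<omega>) k))\<^sup>2 \<partial>M)"
    and "(\<integral>\<omega>. (norm (grad (xk (\<lambda>i. U i \<omega>) k)))\<^sup>2 \<partial>M)
      = (\<integral>\<omega>. (norm (grad (xk (\<lambda>i. V i \<omega>) k)))\<^sup>2 \<partial>M)"
proof -
  show "(\<integral>\<omega>. (norm (gk (\<lambda>i. U i \<omega>) k))\<^sup>2 \<partial>M) = (\<integral>\<omega>. (norm (gk (\<lambda>i. V i \<omega>) k))\<^sup>2 \<partial>M)"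
  proof (rule integral_seq_cong_AE[OF AE U V])
    show "(norm (gk u k))\<^sup>2 = (norm (gk v k))\<^sup>2" if "\<And>i. 1 \<le> i \<Longrightarrow> u i = v i" for u v
      using iterates_cong[OF that] by simp
    fix W :: "nat \<Rightarrow> 'm \<Rightarrow> 'a" assume [measurable]: "\<And>i. W i \<in> borel_measurable M"
    show "(\<lambda>\<omega>. (norm (gk (\<lambda>i. W i \<omega>) k))\<^sup>2) \<in> borel_measurable M"
      by measurable
  qed
  show "(\<integral>\<omega>. (norm (pk (\<lambda>i. U i \<omega>) k))\<^sup>2 \<partial>M) = (\<integral>\<omega>. (norm (pk (\<lambda>i. V i \<omega>) k))\<^sup>2 \<partial>M)"
  proof (rule integral_seq_cong_AE[OF AE U V])
    show "(norm (pk u k))\<^sup>2 = (norm (pk v k))\<^sup>2" if "\<And>i. 1 \<le> i \<Longrightarrow> u i = v i" for u v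
      using iterates_cong[OF that] by simp
    fix W :: "nat \<Rightarrow> 'm \<Rightarrow> 'a" assume [measurable]: "\<And>i. W i \<in> borel_measurable M"
    show "(\<lambda>\<omega>. (norm (pk (\<lambda>i. W i \<omega>) k))\<^sup>2) \<in> borel_measurable M"
      by measurable
  qed
  show "(\<integral>\<omega>. (norm (grad (xk (\<lambda>i. U i \<omega>) k)))\<^sup>2 \<partial>M) = (\<integral>\<omega>. (norm (grad (xk (\<lambda>i. V i \<omega>) k)))\<^sup>2 \<partial>M)"
  proof (rule integral_seq_cong_AE[OF AE U V])
    show "(norm (grad (xk u k)))\<^sup>2 = (norm (grad (xk v k)))\<^sup>2" if "\<And>i. 1 \<le> i \<Longrightarrow> u i = v i" for u v
      using iterates_cong[OF that] by simp
    fix W :: "nat \<Rightarrow> 'm \<Rightarrow> 'a" assume [measurable]: "\<And>i. W i \<in> borel_measurable M"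
    show "(\<lambda>\<omega>. (norm (grad (xk (\<lambda>i. W i \<omega>) k)))\<^sup>2) \<in> borel_measurable M"
      by measurable
  qed
qed

end

section \<open>Second moments\<close>

locale hlf_szo_unit_directions = hlf_szo f grad G L \<alpha> \<beta> \<eta> r x1
  for f :: "'a::euclidean_space \<Rightarrow> real" and grad G L \<alpha> \<beta> \<eta> r x1 +
  fixes M :: "'m measure" and V :: "nat \<Rightarrow> 'm \<Rightarrow> 'a"
  assumes prob_space_M: "prob_space M"
    and indep_V: "prob_space.indep_vars M (\<lambda>_. borel) V {1..}"
    and uniform_V: "\<And>k. k \<ge> 1 \<Longrightarrow> distr M borel (V k) = uniform_sphere"
    and unit_V: "\<And>i \<omega>. norm (V i \<omega>) = 1"
    and measurable_V [measurable]: "\<And>i. V i \<in> borel_measurable M"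
begin

sublocale prob_space M
  by (rule prob_space_M)

lemma integrable_bounded:
  assumes "bounded (F ` unit_sequences)" and "(\<lambda>\<omega>. F (\<lambda>i. V i \<omega>)) \<in> borel_measurable M"
  shows "integrable M (\<lambda>\<omega>. F (\<lambda>i. V i \<omega>) :: real)"
proof -
  obtain B where "\<forall>u\<in>unit_sequences. \<bar>F u\<bar> \<le> B"
    using assms(1) by (auto simp: bounded_real)
  moreover have "(\<lambda>i. V i \<omega>) \<in> unit_sequences" for \<omega>
    by (simp add: unit_sequences_def unit_V)
  ultimately show ?thesis
    using assms(2) by (intro integrable_const_bound[where B=B]) auto
qed

lemma bounded_norm_grad_xk: "bounded ((\<lambda>u. norm (grad (xk u k))) ` unit_sequences)"
  using bounded_iterates by (simp add: bounded_norm_comp bounded_grad_comp)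

lemma bounded_norm_gk: "bounded ((\<lambda>u. norm (gk u k)) ` unit_sequences)"
  unfolding bounded_norm_comp gk_eq using bounded_iterates
  by (intro bounded_bilinear_comp[OF bounded_bilinear_scaleR] bounded_mult_comp bounded_const_comp
      bounded_component_unit_sequences) auto

lemma integrable_iterates [simp]:
  "integrable M (\<lambda>\<omega>. (mk (\<lambda>i. V i \<omega>) k)\<^sup>2)"
  "integrable M (\<lambda>\<omega>. (sk (\<lambda>i. V i \<omega>) k)\<^sup>2)"
  "integrable M (\<lambda>\<omega>. mk (\<lambda>i. V i \<omega>) k * sk (\<lambda>i. V i \<omega>) j)"
  "integrable M (\<lambda>\<omega>. (qk (\<lambda>i. V i \<omega>) k)\<^sup>2)"
  "integrable M (\<lambda>\<omega>. (norm (grad (xk (\<lambda>i. V i \<omega>) k)))\<^sup>2)"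
  "integrable M (\<lambda>\<omega>. (norm (pk (\<lambda>i. V i \<omega>) k))\<^sup>2)"
  "integrable M (\<lambda>\<omega>. (norm (gk (\<lambda>i. V i \<omega>) k))\<^sup>2)"
  using bounded_iterates[of k]
  by (intro integrable_bounded bounded_power2_comp bounded_mult_comp bounded_mk bounded_sk bounded_qk
      bounded_norm_grad_xk bounded_norm_gk; simp add: bounded_norm_comp)+

lemma integral_fresh_direction:
  fixes F :: "(nat \<Rightarrow> 'a) \<Rightarrow> 'a \<Rightarrow> real"
  assumes k: "1 \<le> k"
    and local: "\<And>u u' v. (\<And>i. 1 \<le> i \<Longrightarrow> i < k \<Longrightarrow> u i = u' i) \<Longrightarrow> F u v = F u' v"
    and measurable: "(\<lambda>z. F (extend_unit k (fst z)) (snd z))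
      \<in> borel_measurable (PiM {1..<k} (\<lambda>_. borel) \<Otimes>\<^sub>M borel)"
    and bounded: "\<And>u v. u \<in> unit_sequences \<Longrightarrow> norm v = 1 \<Longrightarrow> \<bar>F u v\<bar> \<le> B"
  shows "(\<integral>\<omega>. F (\<lambda>i. V i \<omega>) (V k \<omega>) \<partial>M) = (\<integral>\<omega>. (\<integral>v. F (\<lambda>i. V i \<omega>) v \<partial>uniform_sphere) \<partial>M)"
proof (rule integral_fresh_uniform_direction[OF prob_space_M indep_V uniform_V[OF k] k unit_V local measurable])
  show "\<bar>F u v\<bar> \<le> B" if "\<And>i. norm (u i) = 1" "norm v = 1" for u v
    using that by (intro bounded) (simp_all add: unit_sequences_def)
qed

lemma grad_xk_inner_bound:
  obtains B where "\<And>u v. u \<in> unit_sequences \<Longrightarrow> norm v = 1 \<Longrightarrow> \<bar>grad (xk u k) \<bullet> v\<bar> \<le> B"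
proof -
  obtain B where B: "\<forall>u\<in>unit_sequences. norm (grad (xk u k)) \<le> B"
    using bounded_norm_grad_xk[of k] by (auto simp: bounded_real)
  have "\<bar>grad (xk u k) \<bullet> v\<bar> \<le> B" if "u \<in> unit_sequences" "norm v = 1" for u v
    using Cauchy_Schwarz_ineq2[of "grad (xk u k)" v] B that by auto
  then show ?thesis
    using that by blast
qed

lemma integral_mk_sk:
  assumes k: "1 \<le> k"
  shows "(\<integral>\<omega>. mk (\<lambda>i. V i \<omega>) k * sk (\<lambda>i. V i \<omega>) (k - 1) \<partial>M) = 0"
proof -
  obtain B1 where B1: "\<forall>u\<in>unit_sequences. \<bar>sk u (k - 1)\<bar> \<le> B1"
    using bounded_sk[of "k - 1"] by (auto simp: bounded_real)
  obtain B2 where B2: "\<And>u v. u \<in> unit_sequences \<Longrightarrow> norm v = 1 \<Longrightarrow> \<bar>grad (xk u k) \<bullet> v\<bar> \<le> B2"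
    using grad_xk_inner_bound by blast
  have "(\<integral>\<omega>. sk (\<lambda>i. V i \<omega>) (k - 1) * (r * (grad (xk (\<lambda>i. V i \<omega>) k) \<bullet> V k \<omega>)) \<partial>M)
      = (\<integral>\<omega>. (\<integral>v. sk (\<lambda>i. V i \<omega>) (k - 1) * (r * (grad (xk (\<lambda>i. V i \<omega>) k) \<bullet> v)) \<partial>uniform_sphere) \<partial>M)"
  proof (rule integral_fresh_direction[OF k])
    show "sk u (k - 1) * (r * (grad (xk u k) \<bullet> v)) = sk u' (k - 1) * (r * (grad (xk u' k) \<bullet> v))"
      if "\<And>i. 1 \<le> i \<Longrightarrow> i < k \<Longrightarrow> u i = u' i" for u u' v
    proof -
      have "sk u (k - 1) = sk u' (k - 1)" "xk u k = xk u' k"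
        using that by (intro sk_local xk_local; simp)+
      then show ?thesis
        by simp
    qed
    show "(\<lambda>z. sk (extend_unit k (fst z)) (k - 1) * (r * (grad (xk (extend_unit k (fst z)) k) \<bullet> snd z)))
        \<in> borel_measurable (PiM {1..<k} (\<lambda>_. borel) \<Otimes>\<^sub>M borel)"
      by measurable
    show "\<bar>sk u (k - 1) * (r * (grad (xk u k) \<bullet> v))\<bar> \<le> B1 * (r * B2)"
      if "u \<in> unit_sequences" "norm v = 1" for u v
      using B1 B2[OF that] that r unfolding abs_mult
      by (intro mult_mono) (auto intro: order_trans[OF abs_ge_zero])
  qed
  then show ?thesis
    using k by (simp add: mk_def integral_uniform_sphere_inner mult_ac)
qed

lemma integral_mk_sq:
  assumes k: "1 \<le> k"
  shows "(\<integral>\<omega>. (mk (\<lambda>i. V i \<omega>) k)\<^sup>2 \<partial>M) = r\<^sup>2 / DIM('a) * (\<integral>\<omega>. (norm (grad (xk (\<lambda>i. V i \<omega>) k)))\<^sup>2 \<partial>M)"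
proof -
  obtain B where B: "\<And>u v. u \<in> unit_sequences \<Longrightarrow> norm v = 1 \<Longrightarrow> \<bar>grad (xk u k) \<bullet> v\<bar> \<le> B"
    using grad_xk_inner_bound by blast
  have "(\<integral>\<omega>. (r * (grad (xk (\<lambda>i. V i \<omega>) k) \<bullet> V k \<omega>))\<^sup>2 \<partial>M)
      = (\<integral>\<omega>. (\<integral>v. (r * (grad (xk (\<lambda>i. V i \<omega>) k) \<bullet> v))\<^sup>2 \<partial>uniform_sphere) \<partial>M)"
  proof (rule integral_fresh_direction[OF k])
    show "(r * (grad (xk u k) \<bullet> v))\<^sup>2 = (r * (grad (xk u' k) \<bullet> v))\<^sup>2"
      if "\<And>i. 1 \<le> i \<Longrightarrow> i < k \<Longrightarrow> u i = u' i" for u u' v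
      using that by (simp add: xk_local[of k u u'])
    show "(\<lambda>z. (r * (grad (xk (extend_unit k (fst z)) k) \<bullet> snd z))\<^sup>2)
        \<in> borel_measurable (PiM {1..<k} (\<lambda>_. borel) \<Otimes>\<^sub>M borel)"
      by measurable
    show "\<bar>(r * (grad (xk u k) \<bullet> v))\<^sup>2\<bar> \<le> (r * B)\<^sup>2"
      if "u \<in> unit_sequences" "norm v = 1" for u v
    proof -
      have "(grad (xk u k) \<bullet> v)\<^sup>2 \<le> B\<^sup>2"
        using B[OF that] by (metis abs_ge_zero order_trans power2_abs power_mono)
      then show ?thesis
        by (simp add: power_mult_distrib mult_left_mono)
    qed
  qed
  then show ?thesis
    by (simp add: mk_def power_mult_distrib integral_uniform_sphere_inner_sq)
qed

lemma integral_qk_sq: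
  assumes "1 \<le> k"
  shows "(\<integral>\<omega>. (qk (\<lambda>i. V i \<omega>) k)\<^sup>2 \<partial>M)
    = (\<integral>\<omega>. (mk (\<lambda>i. V i \<omega>) k)\<^sup>2 \<partial>M) + \<beta>\<^sup>2 * (\<integral>\<omega>. (sk (\<lambda>i. V i \<omega>) (k - 1))\<^sup>2 \<partial>M)"
proof -
  have "(qk u k)\<^sup>2 = (mk u k)\<^sup>2 + \<beta>\<^sup>2 * (sk u (k - 1))\<^sup>2 - 2 * \<beta> * (mk u k * sk u (k - 1))" for u
    by (simp add: qk_def power2_eq_square algebra_simps)
  then show ?thesis
    using integral_mk_sk[OF assms] by simp
qed

lemma integral_sk_sq_Suc:
  "(\<integral>\<omega>. (sk (\<lambda>i. V i \<omega>) (Suc k))\<^sup>2 \<partial>M)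
    = (1 - \<beta>)\<^sup>2 * (\<integral>\<omega>. (sk (\<lambda>i. V i \<omega>) k)\<^sup>2 \<partial>M) + (\<integral>\<omega>. (mk (\<lambda>i. V i \<omega>) (Suc k))\<^sup>2 \<partial>M)"
proof -
  have "(sk u (Suc k))\<^sup>2 = (1 - \<beta>)\<^sup>2 * (sk u k)\<^sup>2 + (mk u (Suc k))\<^sup>2 + 2 * (1 - \<beta>) * (mk u (Suc k) * sk u k)" for u
    by (simp add: power2_eq_square algebra_simps)
  then show ?thesis
    using integral_mk_sk[of "Suc k"] by simp
qed

lemma sum_integral_qk_sq_le:
  "(\<Sum>k=1..T. (\<integral>\<omega>. (qk (\<lambda>i. V i \<omega>) k)\<^sup>2 \<partial>M)) \<le> 2 / (2 - \<beta>) * (\<Sum>k=1..T. (\<integral>\<omega>. (mk (\<lambda>i. V i \<omega>) k)\<^sup>2 \<partial>M))"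
proof -
  define \<sigma> where "\<sigma> k = (\<integral>\<omega>. (sk (\<lambda>i. V i \<omega>) k)\<^sup>2 \<partial>M)" for k
  define \<mu> where "\<mu> k = (\<integral>\<omega>. (mk (\<lambda>i. V i \<omega>) k)\<^sup>2 \<partial>M)" for k
  have \<sigma>_nonneg: "0 \<le> \<sigma> k" for k
    by (simp add: \<sigma>_def)
  have "(\<Sum>k<T. \<sigma> k) \<le> (\<Sum>k=1..T. \<sigma> k)"
    using \<sigma>_nonneg by (intro sum_lessThan_le_sum_atLeast1) (simp_all add: \<sigma>_def)
  also have "\<dots> \<le> (\<Sum>k=1..T. \<mu> k) / (1 - (1 - \<beta>)\<^sup>2)"
  proof (rule sum_le_of_linear_recursion_le[OF _ _ _ \<sigma>_nonneg])
    show "0 \<le> (1 - \<beta>)\<^sup>2" "(1 - \<beta>)\<^sup>2 < 1" "\<sigma> 0 = 0"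
      using \<beta> by (simp_all add: \<sigma>_def abs_square_less_1)
    show "\<sigma> (Suc k) \<le> (1 - \<beta>)\<^sup>2 * \<sigma> k + \<mu> (Suc k)" for k
      unfolding \<sigma>_def \<mu>_def integral_sk_sq_Suc ..
  qed
  finally have \<sigma>_sum: "(\<Sum>k<T. \<sigma> k) \<le> (\<Sum>k=1..T. \<mu> k) / (1 - (1 - \<beta>)\<^sup>2)" .
  have "(\<Sum>k=1..T. (\<integral>\<omega>. (qk (\<lambda>i. V i \<omega>) k)\<^sup>2 \<partial>M)) = (\<Sum>k=1..T. \<mu> k) + \<beta>\<^sup>2 * (\<Sum>k<T. \<sigma> k)"
    by (simp add: integral_qk_sq \<sigma>_def \<mu>_def sum.distrib sum_distrib_left sum.atLeast1_atMost_eq)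
  also have "\<dots> \<le> (\<Sum>k=1..T. \<mu> k) + \<beta>\<^sup>2 * ((\<Sum>k=1..T. \<mu> k) / (1 - (1 - \<beta>)\<^sup>2))"
    using \<sigma>_sum by (intro add_left_mono mult_left_mono) simp_all
  also have "\<dots> = 2 / (2 - \<beta>) * (\<Sum>k=1..T. \<mu> k)"
    using \<beta> by (simp add: field_simps power2_eq_square)
  finally show ?thesis
    by (simp add: \<mu>_def)
qed

lemma sum_integral_pk_le:
  "(\<Sum>k=1..T. (\<integral>\<omega>. (norm (pk (\<lambda>i. V i \<omega>) k))\<^sup>2 \<partial>M))
    \<le> 2 * \<eta>\<^sup>2 * (1 + \<alpha>\<^sup>2) / (1 - \<alpha>\<^sup>2)\<^sup>2 * (\<Sum>k=1..T. (\<integral>\<omega>. (norm (gk (\<lambda>i. V i \<omega>) k))\<^sup>2 \<partial>M))"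
proof -
  have "(\<integral>\<omega>. (\<Sum>k=1..T. (norm (pk (\<lambda>i. V i \<omega>) k))\<^sup>2) \<partial>M)
      \<le> (\<integral>\<omega>. 2 * \<eta>\<^sup>2 * (1 + \<alpha>\<^sup>2) / (1 - \<alpha>\<^sup>2)\<^sup>2 * (\<Sum>k=1..T. (norm (gk (\<lambda>i. V i \<omega>) k))\<^sup>2) \<partial>M)"
    by (intro integral_mono sum_norm_pk_le) simp_all
  then show ?thesis
    by simp
qed

lemma sum_integral_gk_le:
  "(\<Sum>k=1..T. (\<integral>\<omega>. (norm (gk (\<lambda>i. V i \<omega>) k))\<^sup>2 \<partial>M))
    \<le> (DIM('a) / r)\<^sup>2 * (25/8 * (\<Sum>k=1..T. (\<integral>\<omega>. (qk (\<lambda>i. V i \<omega>) k)\<^sup>2 \<partial>M))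
      + 50/9 * real T * (L * r\<^sup>2 / (1 - \<bar>1 - \<beta>\<bar>))\<^sup>2
      + 2 / (1 - \<bar>1 - \<beta>\<bar>)\<^sup>2 * G\<^sup>2 * (\<Sum>k=1..T. (\<integral>\<omega>. (norm (pk (\<lambda>i. V i \<omega>) k))\<^sup>2 \<partial>M)))"
proof -
  have "(\<integral>\<omega>. (\<Sum>k=1..T. (norm (gk (\<lambda>i. V i \<omega>) k))\<^sup>2) \<partial>M)
      \<le> (\<integral>\<omega>. (DIM('a) / r)\<^sup>2 * (25/8 * (\<Sum>k=1..T. (qk (\<lambda>i. V i \<omega>) k)\<^sup>2)
        + 50/9 * real T * (L * r\<^sup>2 / (1 - \<bar>1 - \<beta>\<bar>))\<^sup>2
        + 2 / (1 - \<bar>1 - \<beta>\<bar>)\<^sup>2 * G\<^sup>2 * (\<Sum>k=1..T. (norm (pk (\<lambda>i. V i \<omega>) k))\<^sup>2)) \<partial>M)"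
    by (intro integral_mono sum_norm_gk_le) (simp_all add: unit_sequences_def unit_V)
  then show ?thesis
    by (simp add: prob_space)
qed

lemma sum_integral_gk_le_grad:
  defines "d \<equiv> real DIM('a)" and "\<beta>' \<equiv> 1 - \<bar>1 - \<beta>\<bar>"
  shows "(\<Sum>k=1..T. (\<integral>\<omega>. (norm (gk (\<lambda>i. V i \<omega>) k))\<^sup>2 \<partial>M))
    \<le> 25 * d / (4 * \<beta>'\<^sup>2) * (\<Sum>k=1..T. (\<integral>\<omega>. (norm (grad (xk (\<lambda>i. V i \<omega>) k)))\<^sup>2 \<partial>M))
      + 10 * real T * r\<^sup>2 * L\<^sup>2 * d\<^sup>2 / \<beta>'\<^sup>2
      + (d / r)\<^sup>2 * (2 / \<beta>'\<^sup>2 * G\<^sup>2) * (\<Sum>k=1..T. (\<integral>\<omega>. (norm (pk (\<lambda>i. V i \<omega>) k))\<^sup>2 \<partial>M))"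
proof -
  define Eq where "Eq = (\<Sum>k=1..T. (\<integral>\<omega>. (qk (\<lambda>i. V i \<omega>) k)\<^sup>2 \<partial>M))"
  define Ep where "Ep = (\<Sum>k=1..T. (\<integral>\<omega>. (norm (pk (\<lambda>i. V i \<omega>) k))\<^sup>2 \<partial>M))"
  define Egrad where "Egrad = (\<Sum>k=1..T. (\<integral>\<omega>. (norm (grad (xk (\<lambda>i. V i \<omega>) k)))\<^sup>2 \<partial>M))"
  have d: "0 < d"
    by (simp add: d_def)
  have \<beta>': "0 < \<beta>'" "\<beta>'\<^sup>2 \<le> 2 - \<beta>"
    using \<beta> power2_one_minus_abs_le[OF \<beta>] by (auto simp: \<beta>'_def)
  have "Eq \<le> 2 / (2 - \<beta>) * (r\<^sup>2 / d * Egrad)"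
    using sum_integral_qk_sq_le by (simp add: Eq_def Egrad_def d_def integral_mk_sq sum_distrib_left)
  then have "(d / r)\<^sup>2 * (25/8 * Eq) \<le> (d / r)\<^sup>2 * (25/8 * (2 / (2 - \<beta>) * (r\<^sup>2 / d * Egrad)))"
    by (intro mult_left_mono) auto
  also have "\<dots> = 25 * d / (4 * (2 - \<beta>)) * Egrad"
    using d r \<beta> by (simp add: field_simps power2_eq_square)
  also have "\<dots> \<le> 25 * d / (4 * \<beta>'\<^sup>2) * Egrad"
    using d \<beta> \<beta>' by (intro mult_right_mono divide_left_mono) (auto simp: Egrad_def intro!: sum_nonneg)
  finally have Eq_bound: "(d / r)\<^sup>2 * (25/8 * Eq) \<le> 25 * d / (4 * \<beta>'\<^sup>2) * Egrad" .
  have T_bound: "(d / r)\<^sup>2 * (50/9 * real T * (L * r\<^sup>2 / \<beta>')\<^sup>2) \<le> 10 * real T * r\<^sup>2 * L\<^sup>2 * d\<^sup>2 / \<beta>'\<^sup>2"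
  proof -
    have "(d / r)\<^sup>2 * (50/9 * real T * (L * r\<^sup>2 / \<beta>')\<^sup>2) = 5/9 * (10 * real T * r\<^sup>2 * L\<^sup>2 * d\<^sup>2 / \<beta>'\<^sup>2)"
      using r by (simp add: field_simps power2_eq_square)
    moreover have "0 \<le> 10 * real T * r\<^sup>2 * L\<^sup>2 * d\<^sup>2 / \<beta>'\<^sup>2"
      by simp
    ultimately show ?thesis
      by linarith
  qed
  have "(\<Sum>k=1..T. (\<integral>\<omega>. (norm (gk (\<lambda>i. V i \<omega>) k))\<^sup>2 \<partial>M))
      \<le> (d / r)\<^sup>2 * (25/8 * Eq + 50/9 * real T * (L * r\<^sup>2 / \<beta>')\<^sup>2 + 2 / \<beta>'\<^sup>2 * G\<^sup>2 * Ep)"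
    using sum_integral_gk_le[of T] by (simp add: Eq_def Ep_def d_def \<beta>'_def)
  also have "\<dots> = (d / r)\<^sup>2 * (25/8 * Eq) + (d / r)\<^sup>2 * (50/9 * real T * (L * r\<^sup>2 / \<beta>')\<^sup>2)
      + (d / r)\<^sup>2 * (2 / \<beta>'\<^sup>2 * G\<^sup>2) * Ep"
    by (simp add: algebra_simps)
  also have "\<dots> \<le> 25 * d / (4 * \<beta>'\<^sup>2) * Egrad + 10 * real T * r\<^sup>2 * L\<^sup>2 * d\<^sup>2 / \<beta>'\<^sup>2
      + (d / r)\<^sup>2 * (2 / \<beta>'\<^sup>2 * G\<^sup>2) * Ep"
    using Eq_bound T_bound by (intro add_mono order_refl)
  finally show ?thesis
    unfolding Egrad_def Ep_def .
qed

lemma sum_integral_gk_bound: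
  defines "d \<equiv> real DIM('a)" and "\<beta>' \<equiv> 1 - \<bar>1 - \<beta>\<bar>"
  defines "\<theta> \<equiv> 1 - 4 * \<eta>\<^sup>2 * d\<^sup>2 * G\<^sup>2 * (1 + \<alpha>\<^sup>2) / (\<beta>'\<^sup>2 * r\<^sup>2 * (1 - \<alpha>\<^sup>2)\<^sup>2)"
  assumes \<theta>: "0 < \<theta>"
  shows "(\<Sum>k=1..T. (\<integral>\<omega>. (norm (gk (\<lambda>i. V i \<omega>) k))\<^sup>2 \<partial>M))
    \<le> 25 * d / (4 * \<theta> * \<beta>'\<^sup>2) * (\<Sum>k=1..T. (\<integral>\<omega>. (norm (grad (xk (\<lambda>i. V i \<omega>) k)))\<^sup>2 \<partial>M))
      + 10 * real T * r\<^sup>2 * L\<^sup>2 * d\<^sup>2 / (\<theta> * \<beta>'\<^sup>2)"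
proof -
  define K where "K = (d / r)\<^sup>2 * (2 / \<beta>'\<^sup>2 * G\<^sup>2)"
  have "0 < d" "0 < \<beta>'" "0 < 1 - \<alpha>\<^sup>2"
    using \<alpha> \<beta> by (simp_all add: d_def \<beta>'_def abs_square_less_1)
  then have "K * (2 * \<eta>\<^sup>2 * (1 + \<alpha>\<^sup>2) / (1 - \<alpha>\<^sup>2)\<^sup>2) = 1 - \<theta>"
    using r by (simp add: K_def \<theta>_def field_simps power2_eq_square)
  from le_divide_of_coupled_le[OF sum_integral_gk_le_grad[of T, folded d_def \<beta>'_def, folded K_def]
      sum_integral_pk_le _ this \<theta>]
  show ?thesis
    using \<theta> by (simp add: K_def add_divide_distrib mult_ac)
qed

end

theorem lemma3:
  fixes f :: "'a::euclidean_space \<Rightarrow> real" and grad :: "'a \<Rightarrow> 'a"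
    and M :: "'m measure" and U :: "nat \<Rightarrow> 'm \<Rightarrow> 'a"
    and G L \<alpha> \<beta> \<eta> r :: real and x1 :: 'a and T :: nat
  assumes lip: "\<And>x y. \<bar>f x - f y\<bar> \<le> G * norm (x - y)"
    and deriv: "\<And>x. (f has_derivative (\<lambda>h. grad x \<bullet> h)) (at x)"
    and smooth: "\<And>x y. norm (grad x - grad y) \<le> L * norm (x - y)"
    and "prob_space M"
    and indep: "prob_space.indep_vars M (\<lambda>_. borel) U {1..}"
    and unif: "\<And>k. k \<ge> 1 \<Longrightarrow> distr M borel (U k) = uniform_sphere"
    and \<alpha>: "0 \<le> \<alpha>" "\<alpha> < 1" and \<beta>: "0 < \<beta>" "\<beta> < 2" and \<eta>: "\<eta> > 0" and r: "r > 0"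
    and \<theta>: "1 - 4 * \<eta>^2 * real DIM('a)^2 * G^2 * (1 + \<alpha>^2)
              / ((1 - \<bar>1 - \<beta>\<bar>)^2 * r^2 * (1 - \<alpha>^2)^2) > 0"
    and T: "T \<ge> 1"
  shows "let d = real DIM('a); \<beta>' = 1 - \<bar>1 - \<beta>\<bar>;
             \<theta> = 1 - 4 * \<eta>^2 * d^2 * G^2 * (1 + \<alpha>^2) / (\<beta>'^2 * r^2 * (1 - \<alpha>^2)^2);
             Eg = (\<Sum>k=1..T. integral\<^sup>L M (\<lambda>\<omega>. norm (hlf_g f \<alpha> \<beta> \<eta> r x1 (\<lambda>j. U j \<omega>) k)^2));
             Ep = (\<Sum>k=1..T. integral\<^sup>L M (\<lambda>\<omega>. norm (hlf_p f \<alpha> \<beta> \<eta> r x1 (\<lambda>j. U j \<omega>) k)^2));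
             Egrad = (\<Sum>k=1..T. integral\<^sup>L M (\<lambda>\<omega>. norm (grad (hlf_x f \<alpha> \<beta> \<eta> r x1 (\<lambda>j. U j \<omega>) k))^2))
         in Eg \<le> 25 * d / (4 * \<theta> * \<beta>'^2) * Egrad + 10 * real T * r^2 * L^2 * d^2 / (\<theta> * \<beta>'^2)
            \<and> Ep \<le> 2 * \<eta>^2 * (1 + \<alpha>^2) / (1 - \<alpha>^2)^2 * Eg"
proof -
  interpret hlf_szo f grad G L \<alpha> \<beta> \<eta> r x1
    using lip deriv smooth \<alpha> \<beta> r by unfold_locales
  obtain V where V: "prob_space.indep_vars M (\<lambda>_. borel) V {1..}"
    "\<And>k. k \<ge> 1 \<Longrightarrow> distr M borel (V k) = uniform_sphere"
    "\<And>i \<omega>. norm (V i \<omega>) = 1" "\<And>i. V i \<in> borel_measurable M"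
    "AE \<omega> in M. \<forall>i\<ge>1. V i \<omega> = U i \<omega>"
    using force_unit_modification[OF \<open>prob_space M\<close> indep unif] by blast
  interpret hlf_szo_unit_directions f grad G L \<alpha> \<beta> \<eta> r x1 M V
    by (intro_locales; use lip deriv smooth \<alpha> \<beta> r \<open>prob_space M\<close> V(1-4) in
        \<open>auto intro: hlf_szo_unit_directions_axioms.intro\<close>)
  have "U i \<in> borel_measurable M" if "i \<ge> 1" for i
    using indep that by (auto simp: indep_vars_def)
  note same_integrals = integrals_iterates_cong[OF V(5) this V(4)]
  show ?thesis
    using sum_integral_gk_bound[OF \<theta>, of T] sum_integral_pk_le[of T]
    by (simp only: Let_def same_integrals)
qed

end
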